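(* (1) If $\mathrm{HL}\vdash H\to C$ and $e_0\in E_H$ is labeled by $\times(M)$, then $\mathrm{HL}\vdash H[e_0/M]\to C$. (2) If $\mathrm{HL}\vdash H\to N\div D$ and $e_0\in E_D$ is the edge of $D$ labeled by $\$$, then $\mathrm{HL}\vdash D[e_0/H]\to N$.
   Context: Hypergraphs: given labels $C$ with $type:C\to\mathbb{N}$, a graph is $G=\langle V,E,att,lab,ext\rangle$ with finite $V,E$, $att:E\to V^\circledast$ (strings of distinct nodes), $lab:E\to C$ with $type(lab(e))=|att(e)|$, $ext\in V^\circledast$; $type(G)=|ext|$; isomorphic graphs identified. Handle $a^\bullet$: one edge labeled $a$ attached to $v_1\dots v_n$, all external in that order. Replacement $G[e/H]$ ($type(e)=type(H)$): remove $e$, insert a disjoint copy of $H$, fuse the $i$-th external node of $H$ with the $i$-th attachment node of $e$; simultaneous replacement; relabeling $G[e:=a]$. $\mathrm{HL}$: primitive types $Pr$ with $type:Pr\to\mathbb{N}$ (infinitely many of each arity); symbol $\$$ of any arity. Types: primitives; $N\div D$ where $D$ has exactly one edge $d_0$ labeled $\$$, others labeled by types, $type(N)=type(D)$, $type(N\div D)=type_D(d_0)$; $\times(M)$ for a type-labeled graph $M$, $type(\times(M))=type(M)$. Graph sequent $H\to A$ with $type(H)=type(A)$. Axioms $p^\bullet\to p$. Rules: $(\div\to)$: for $N\div D$ with $E_D=\{d_0,\dots,d_k\}$, $e\in E_H$ labeled $N$: from $H\to A$, $H_i\to lab(d_i)$ infer $H[e/D][d_0:=N\div D][d_1/H_1,\dots,d_k/H_k]\to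 A$; $(\to\div)$: from $D[d_0/F]\to N$ infer $F\to N\div D$; $(\times\to)$: if $e\in E_G$ is labeled $\times(F)$, from $G[e/F]\to A$ infer $G\to A$; $(\to\times)$: with $E_M=\{m_1,\dots,m_l\}$ ($l\ge0$), from $H_i\to lab(m_i)$ infer $M[m_1/H_1,\dots,m_l/H_l]\to\times(M)$. *)

theory Defs
  imports Main "HOL-Library.Nat_Bijection"
begin

text \<open>A hypergraph with labels of type 'l: a node set V, a finite list of edges
  (edge i is the i-th list entry, given by its attachment string and label),
  and the string of external nodes. Isomorphic graphs are identified via the
  relation hg_iso below (derivability is closed under it).\<close>

datatype 'l hgraph = HG (gV: "nat set") (gE: "(nat list \<times> 'l) list") (gext: "nat list")

definition hg_struct :: "'l hgraph \<Rightarrow> bool" where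
  "hg_struct G \<longleftrightarrow> finite (gV G)
     \<and> (\<forall>(a, l) \<in> set (gE G). distinct a \<and> set a \<subseteq> gV G)
     \<and> distinct (gext G) \<and> set (gext G) \<subseteq> gV G"

definition hg_iso :: "'l hgraph \<Rightarrow> 'l hgraph \<Rightarrow> bool" where
  "hg_iso G G' \<longleftrightarrow> (\<exists>f \<pi>. bij_betw f (gV G) (gV G')
      \<and> bij_betw \<pi> {..<length (gE G)} {..<length (gE G')}
      \<and> (\<forall>i < length (gE G). gE G' ! \<pi> i = (map f (fst (gE G ! i)), snd (gE G ! i)))
      \<and> gext G' = map f (gext G))"

text \<open>Simultaneous replacement: every edge i with r i = Some H is removed and a
  disjoint copy of H is inserted, the j-th external node of H being fused with
  the j-th attachment node of edge i. Nodes of G are renamed to prod_encode (0,v),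
  internal nodes w of the copy of H for edge i to prod_encode (Suc i, w).
  Edges are kept in order; the edges of the copy of H replacing edge i appear
  (in the order of H) at the position of edge i.\<close>

definition g_node :: "nat \<Rightarrow> nat" where
  "g_node v = prod_encode (0, v)"

definition h_node :: "nat \<Rightarrow> 'l hgraph \<Rightarrow> nat list \<Rightarrow> nat \<Rightarrow> nat" where
  "h_node i H a w = (case map_of (zip (gext H) a) w of
       Some u \<Rightarrow> g_node u | None \<Rightarrow> prod_encode (Suc i, w))"

definition repl :: "'l hgraph \<Rightarrow> (nat \<Rightarrow> 'l hgraph option) \<Rightarrow> 'l hgraph" where
  "repl G r = HG
     (g_node ` gV G \<union>
        (\<Union>i \<in> {i. i < length (gE G)}. case r i of None \<Rightarrow> {}
           | Some H \<Rightarrow> (\<lambda>w. prod_encode (Suc i, w)) ` (gV H - set (gext H))))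
     (concat (map (\<lambda>(i, (a, l)). case r i of
                None \<Rightarrow> [(map g_node a, l)]
              | Some H \<Rightarrow> map (\<lambda>(b, l'). (map (h_node i H a) b, l')) (gE H))
        (enumerate 0 (gE G))))
     (map g_node (gext G))"

definition repl1 :: "'l hgraph \<Rightarrow> nat \<Rightarrow> 'l hgraph \<Rightarrow> 'l hgraph" where
  "repl1 G e H = repl G (\<lambda>i. if i = e then Some H else None)"

definition handle :: "'l \<Rightarrow> nat \<Rightarrow> 'l hgraph" where
  "handle a n = HG {..<n} [([0..<n], a)] [0..<n]"

text \<open>Primitive types: Prim p n is the p-th primitive type of arity n (so there are
  infinitely many of each arity). In Div N D, the label None plays the role of
  the symbol \$, Some t the type t.\<close>

datatype tp = Prim nat nat | Div tp "tp option hgraph" | Times "tp hgraph"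

definition ttype :: "tp \<Rightarrow> nat" where
  "ttype A = (case A of
      Prim p n \<Rightarrow> n
    | Div N D \<Rightarrow> (case find (\<lambda>(a, l). l = None) (gE D) of
                    Some (a, l) \<Rightarrow> length a | None \<Rightarrow> 0)
    | Times M \<Rightarrow> length (gext M))"

inductive wf_tp :: "tp \<Rightarrow> bool" where
  wf_Prim: "wf_tp (Prim p n)"
| wf_Div: "\<lbrakk> wf_tp N; hg_struct D;
             length (filter (\<lambda>(a, l). l = None) (gE D)) = 1;
             \<forall>a t. (a, Some t) \<in> set (gE D) \<longrightarrow> wf_tp t \<and> length a = ttype t;
             ttype N = length (gext D) \<rbrakk> \<Longrightarrow> wf_tp (Div N D)"
| wf_Times: "\<lbrakk> hg_struct M;
             \<forall>a t. (a, t) \<in> set (gE M) \<longrightarrow> wf_tp t \<and> length a = ttype t \<rbrakk>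
             \<Longrightarrow> wf_tp (Times M)"

definition wfg :: "tp hgraph \<Rightarrow> bool" where
  "wfg G \<longleftrightarrow> hg_struct G \<and> (\<forall>a t. (a, t) \<in> set (gE G) \<longrightarrow> wf_tp t \<and> length a = ttype t)"

definition fill :: "tp option hgraph \<Rightarrow> tp \<Rightarrow> tp hgraph" where
  "fill D A = map_hgraph (\<lambda>l. case l of None \<Rightarrow> A | Some t \<Rightarrow> t) D"

definition plug :: "tp option hgraph \<Rightarrow> nat \<Rightarrow> tp hgraph \<Rightarrow> tp hgraph" where
  "plug D d0 F = repl1 (map_hgraph the D) d0 F"

text \<open>Conclusion graph of the rule (div L): H[e/D][d0 := N div D][d1/H1,...,dk/Hk].
  In H[e/D] the j-th edge of D sits at index e + j.\<close>
definition divL_graph :: "tp hgraph \<Rightarrow> nat \<Rightarrow> tp \<Rightarrow> tp option hgraph \<Rightarrow> nat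
                          \<Rightarrow> (nat \<Rightarrow> tp hgraph) \<Rightarrow> tp hgraph" where
  "divL_graph H e N D d0 Hs =
     repl (repl1 H e (fill D (Div N D)))
          (\<lambda>i. if e \<le> i \<and> i < e + length (gE D) \<and> i \<noteq> e + d0 then Some (Hs (i - e)) else None)"

inductive HL :: "tp hgraph \<Rightarrow> tp \<Rightarrow> bool" where
  Ax: "HL (handle (Prim p n) n) (Prim p n)"
| Iso: "\<lbrakk> HL G A; hg_iso G G' \<rbrakk> \<Longrightarrow> HL G' A"
| DivL: "\<lbrakk> HL H A; wfg H; e < length (gE H); snd (gE H ! e) = N;
           wf_tp (Div N D); d0 < length (gE D); snd (gE D ! d0) = None;
           \<forall>j < length (gE D). j \<noteq> d0 \<longrightarrow> HL (Hs j) (the (snd (gE D ! j))) \<rbrakk>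
         \<Longrightarrow> HL (divL_graph H e N D d0 Hs) A"
| DivR: "\<lbrakk> HL (plug D d0 F) N; wf_tp (Div N D); d0 < length (gE D);
           snd (gE D ! d0) = None; wfg F; length (gext F) = ttype (Div N D) \<rbrakk>
         \<Longrightarrow> HL F (Div N D)"
| TimesL: "\<lbrakk> HL (repl1 G e F) A; wfg G; e < length (gE G); snd (gE G ! e) = Times F \<rbrakk>
         \<Longrightarrow> HL G A"
| TimesR: "\<lbrakk> wf_tp (Times M); \<forall>i < length (gE M). HL (Hs i) (snd (gE M ! i)) \<rbrakk>
         \<Longrightarrow> HL (repl M (\<lambda>i. if i < length (gE M) then Some (Hs i) else None)) (Times M)"

end

theory Submission
  imports Defs "HOL-Combinatorics.List_Permutation"
begin

(* Both statements are proved by induction on the derivation, moving the inverted rule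
   instance -- the TimesL step at e0, resp. the DivR step that fills the $-edge -- upwards
   past all other rule instances.  In the principal cases the premise already is the required
   sequent (for DivR because D has only one $-edge).  All other cases rest on three laws of
   hyperedge replacement, each valid up to isomorphism: replacement respects isomorphism,
   replacements at distinct edges commute, and nested replacements associate.  To prove these,
   a replacement is described by node embeddings of the host graph and of the inserted graphs
   into the result; any two graphs with the same description are isomorphic via the map glued
   together from the embeddings, and descriptions can be composed. *)

section \<open>Multisets and finite families\<close>

lemma image_mset_sum: "image_mset f (sum g A) = (\<Sum>x\<in>A. image_mset f (g x))"
  by (induct A rule: infinite_finite_induct) auto

lemma mem_sum_mset_iff: "finite I \<Longrightarrow> x \<in># (\<Sum>i\<in>I. M i) \<longleftrightarrow> (\<exists>i\<in>I. x \<in># M i)"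
  by (induct I rule: finite_induct) auto

definition mset_family :: "'i set \<Rightarrow> ('i \<Rightarrow> 'a) \<Rightarrow> 'a multiset" where
  "mset_family I es = (\<Sum>i\<in>I. {#es i#})"

lemma mset_family_mem: "finite I \<Longrightarrow> i \<in> I \<Longrightarrow> es i \<in># mset_family I es"
  by (auto simp: mset_family_def mem_sum_mset_iff)

lemma mset_family_singleton[simp]: "mset_family {e} f = {#f e#}"
  by (simp add: mset_family_def)

lemma mset_family_split: "finite B \<Longrightarrow> A \<subseteq> B \<Longrightarrow> mset_family B es = mset_family A es + mset_family (B - A) es"
  unfolding mset_family_def by (metis add.commute sum.subset_diff)

lemma sum_list_map_upt: "sum_list (map g [0..<n]) = (\<Sum>i<n. g i)"
  by (induct n) auto

lemma enumerate0: "enumerate 0 xs = map (\<lambda>i. (i, xs ! i)) [0..<length xs]"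
  by (rule nth_equalityI) (auto simp: nth_enumerate_eq)

lemma mset_eq_mset_family_nth: "mset xs = mset_family {..<length xs} (\<lambda>i. xs ! i)"
proof (induct xs rule: rev_induct)
  case Nil
  show ?case by (simp add: mset_family_def)
next
  case (snoc x xs)
  have "mset_family {..<length (xs @ [x])} (\<lambda>i. (xs @ [x]) ! i)
      = mset_family {..<length xs} (\<lambda>i. (xs @ [x]) ! i) + {#x#}"
    unfolding mset_family_def by simp
  also have "mset_family {..<length xs} (\<lambda>i. (xs @ [x]) ! i) = mset_family {..<length xs} (\<lambda>i. xs ! i)"
    unfolding mset_family_def by (rule sum.cong) (auto simp: nth_append)
  finally show ?case using snoc by simp
qed

lemma mset_nth_split:
  assumes "j < length xs"
  shows "mset xs = {#xs ! j#} + mset_family ({..<length xs} - {j}) (\<lambda>i. xs ! i)"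
  unfolding mset_eq_mset_family_nth[of xs] using mset_family_split[of "{..<length xs}" "{j}"] assms by simp

lemma mset_diff_nth:
  assumes "j < length xs"
  shows "mset xs - {#xs ! j#} = mset_family ({..<length xs} - {j}) (\<lambda>i. xs ! i)"
  using mset_nth_split[OF assms] by simp

lemma nth_mem_diff_nth:
  assumes "i < length xs" "j < length xs" "i \<noteq> j"
  shows "xs ! i \<in># mset xs - {#xs ! j#}"
  unfolding mset_diff_nth[OF assms(2)] by (rule mset_family_mem) (use assms in auto)

lemma mem_diff_nth_idx:
  assumes "x \<in># mset xs - {#xs ! j#}" "j < length xs"
  shows "\<exists>i<length xs. i \<noteq> j \<and> xs ! i = x"
  using assms unfolding mset_diff_nth[OF assms(2)] mset_family_def by (auto simp: mem_sum_mset_iff)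

lemma mset_upt_image:
  assumes "bij_betw p {..<n} {..<m}"
  shows "image_mset p (mset [0..<n]) = mset [0..<m]"
proof -
  have "image_mset p (mset_set {..<n}) = mset_set (p ` {..<n})"
    using assms by (simp add: bij_betw_def image_mset_mset_set)
  moreover have "mset [0..<k] = mset_set {..<k}" for k
    by (metis atLeast0LessThan mset_set_upto_eq_mset_upto)
  ultimately show ?thesis using assms by (simp add: bij_betw_def)
qed

lemma sum_Inl_Inr:
  assumes "finite I" "finite J"
  shows "(\<Sum>x\<in>Inl ` I \<union> Inr ` J. h x) = (\<Sum>i\<in>I. h (Inl i)) + (\<Sum>j\<in>J. h (Inr j))"
proof -
  have "(\<Sum>x\<in>Inl ` I \<union> Inr ` J. h x) = (\<Sum>x\<in>Inl ` I. h x) + (\<Sum>x\<in>Inr ` J. h x)"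
    by (rule sum.union_disjoint) (use assms in auto)
  also have "(\<Sum>x\<in>Inl ` I. h x) = (\<Sum>i\<in>I. h (Inl i))" by (simp add: sum.reindex)
  also have "(\<Sum>x\<in>Inr ` J. h x) = (\<Sum>j\<in>J. h (Inr j))" by (simp add: sum.reindex)
  finally show ?thesis .
qed

lemma disjoint_by_cover:
  assumes "A \<inter> C = {}" "\<And>j. j \<in> J \<Longrightarrow> B j \<inter> C = {}" "X \<subseteq> A \<union> (\<Union>j\<in>J. B j)"
  shows "X \<inter> C = {}"
  using assms by blast

lemma inj_on_image_disjoint:
  "inj_on f C \<Longrightarrow> A \<subseteq> C \<Longrightarrow> B \<subseteq> C \<Longrightarrow> A \<inter> B = {} \<Longrightarrow> f ` A \<inter> f ` B = {}"
  by (simp add: inj_on_image_Int[symmetric])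

lemma image_mset_add_diff:
  assumes "B \<subseteq># R"
  shows "image_mset f R + S - image_mset f B = image_mset f (R - B) + S"
proof -
  have "image_mset f R = image_mset f (R - B) + image_mset f B"
    using subset_mset.diff_add[OF assms] by (metis image_mset_union)
  then show ?thesis by simp
qed

section \<open>Hypergraphs and isomorphism\<close>

lemma hg_struct_edge:
  "hg_struct G \<Longrightarrow> x \<in> set (gE G) \<Longrightarrow> distinct (fst x) \<and> set (fst x) \<subseteq> gV G"
  unfolding hg_struct_def by (cases x) auto

lemma hg_struct_edge_subset: "hg_struct H \<Longrightarrow> e \<in> set (gE H) \<Longrightarrow> set (fst e) \<subseteq> gV H"
  using hg_struct_edge by blast

lemma map_hgraph_sel[simp]:
  "gV (map_hgraph f G) = gV G" "gE (map_hgraph f G) = map (\<lambda>(a, l). (a, f l)) (gE G)"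
  "gext (map_hgraph f G) = gext G"
  by (cases G; simp add: map_prod_def)+

lemma hg_struct_map[simp]: "hg_struct (map_hgraph f G) = hg_struct G"
  unfolding hg_struct_def by (auto simp: case_prod_beta)

definition inner_nodes :: "'l hgraph \<Rightarrow> nat set" where "inner_nodes H = gV H - set (gext H)"

lemma inner_nodes_subset: "inner_nodes H \<subseteq> gV H" unfolding inner_nodes_def by blast

definition map_edge :: "(nat \<Rightarrow> nat) \<Rightarrow> nat list \<times> 'l \<Rightarrow> nat list \<times> 'l" where
  "map_edge f x = (map f (fst x), snd x)"

lemma map_edge_Pair[simp]: "map_edge f (a, l) = (map f a, l)" by (simp add: map_edge_def)

lemma snd_map_edge[simp]: "snd (map_edge f x) = snd x" by (simp add: map_edge_def)

lemma fst_map_edge[simp]: "fst (map_edge f x) = map f (fst x)" by (simp add: map_edge_def)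

lemma map_edge_comp: "map_edge f (map_edge g x) = map_edge (f \<circ> g) x" by (simp add: map_edge_def)

lemma map_edge_id[simp]: "map_edge id = id"
  by (auto simp: map_edge_def fun_eq_iff)

lemma map_edge_cong: "(\<And>x. x \<in> set (fst e) \<Longrightarrow> f x = g x) \<Longrightarrow> map_edge f e = map_edge g e"
  by (simp add: map_edge_def)

lemma image_mset_map_edge_cong:
  assumes "\<And>e. e \<in># M \<Longrightarrow> set (fst e) \<subseteq> A" "\<And>x. x \<in> A \<Longrightarrow> f x = g x"
  shows "image_mset (map_edge f) M = image_mset (map_edge g) M"
  by (rule image_mset_cong) (use assms in \<open>auto intro!: map_edge_cong\<close>)

lemma image_mset_map_edge_comp: "image_mset (map_edge f) (image_mset (map_edge g) M) = image_mset (map_edge (f \<circ> g)) M"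
  by (simp add: image_mset.compositionality comp_def map_edge_comp)

lemma mset_family_map_edge:
  assumes "\<And>j. j \<in> J \<Longrightarrow> fs j = map_edge f (gs j)"
  shows "mset_family J fs = image_mset (map_edge f) (mset_family J gs)"
  unfolding mset_family_def image_mset_sum by (rule sum.cong) (auto simp: assms)

(* Comparing edges as multisets makes the edge bijection of hg_iso implicit. *)
definition hg_iso_by :: "'l hgraph \<Rightarrow> 'l hgraph \<Rightarrow> (nat \<Rightarrow> nat) \<Rightarrow> bool" where
  "hg_iso_by G G' f \<longleftrightarrow> bij_betw f (gV G) (gV G')
     \<and> mset (gE G') = image_mset (map_edge f) (mset (gE G)) \<and> gext G' = map f (gext G)"

lemma hg_iso_iff: "hg_iso G G' \<longleftrightarrow> (\<exists>f. hg_iso_by G G' f)"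
proof
  assume "hg_iso G G'"
  then obtain f \<pi> where f: "bij_betw f (gV G) (gV G')"
     and p: "bij_betw \<pi> {..<length (gE G)} {..<length (gE G')}"
     and e: "\<forall>i < length (gE G). gE G' ! \<pi> i = (map f (fst (gE G ! i)), snd (gE G ! i))"
     and x: "gext G' = map f (gext G)" unfolding hg_iso_def by blast
  have "mset (gE G') = image_mset (\<lambda>i. gE G' ! i) (mset [0..<length (gE G')])"
    by (metis map_nth mset_map)
  also have "\<dots> = image_mset (\<lambda>i. gE G' ! i) (image_mset \<pi> (mset [0..<length (gE G)]))"
    using mset_upt_image[OF p] by simp
  also have "\<dots> = image_mset (\<lambda>i. map_edge f (gE G ! i)) (mset [0..<length (gE G)])"
    by (simp add: image_mset.compositionality) (rule image_mset_cong, use e in \<open>auto simp: map_edge_def\<close>)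
  also have "\<dots> = image_mset (map_edge f) (mset (gE G))"
  proof -
    have "map (\<lambda>i. map_edge f (gE G ! i)) [0..<length (gE G)] = map (map_edge f) (gE G)"
      by (rule nth_equalityI) auto
    then show ?thesis by (metis mset_map)
  qed
  finally show "\<exists>f. hg_iso_by G G' f" using f x unfolding hg_iso_by_def by blast
next
  assume "\<exists>f. hg_iso_by G G' f"
  then obtain f where f: "bij_betw f (gV G) (gV G')"
    and m: "mset (gE G') = image_mset (map_edge f) (mset (gE G))" and x: "gext G' = map f (gext G)"
    unfolding hg_iso_by_def by blast
  have "mset (map (map_edge f) (gE G)) = mset (gE G')" using m by simp
  from permutation_Ex_bij[OF this] obtain p where
    p: "bij_betw p {..<length (gE G)} {..<length (gE G')}"
    and q: "\<forall>i<length (gE G). map_edge f (gE G ! i) = gE G' ! p i" by auto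
  show "hg_iso G G'" unfolding hg_iso_def
    by (rule exI[of _ f], rule exI[of _ p]) (use f p q x in \<open>auto simp: map_edge_def\<close>)
qed

lemma hg_iso_by_edge:
  assumes "hg_iso_by G G' f" "e' < length (gE G')"
  obtains e where "e < length (gE G)" "gE G' ! e' = map_edge f (gE G ! e)"
proof -
  have "gE G' ! e' \<in># image_mset (map_edge f) (mset (gE G))"
    using assms unfolding hg_iso_by_def by (metis nth_mem_mset)
  then obtain y where "y \<in> set (gE G)" "gE G' ! e' = map_edge f y" by auto
  then show ?thesis using that by (metis in_set_conv_nth)
qed

lemma hg_iso_by_refl: "hg_iso_by H H id"
  unfolding hg_iso_by_def by simp

lemma hg_iso_by_sym:
  assumes s: "hg_struct G" and h: "hg_iso_by G G' f"
  shows "hg_iso_by G' G (inv_into (gV G) f)"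
proof -
  let ?g = "inv_into (gV G) f"
  have b: "bij_betw f (gV G) (gV G')" and E: "mset (gE G') = image_mset (map_edge f) (mset (gE G))"
    and x: "gext G' = map f (gext G)" using h unfolding hg_iso_by_def by auto
  have gf: "?g (f v) = v" if "v \<in> gV G" for v using bij_betw_inv_into_left[OF b that] .
  have "image_mset (map_edge ?g) (mset (gE G')) = image_mset (map_edge (?g \<circ> f)) (mset (gE G))"
    unfolding E image_mset_map_edge_comp ..
  also have "\<dots> = image_mset (map_edge id) (mset (gE G))"
    by (rule image_mset_map_edge_cong[where A = "gV G"]) (use hg_struct_edge_subset[OF s] gf in auto)
  finally have E': "mset (gE G) = image_mset (map_edge ?g) (mset (gE G'))" by simp
  have "map ?g (gext G') = gext G"
    unfolding x using s gf unfolding hg_struct_def by (auto intro!: map_idI)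
  then show ?thesis unfolding hg_iso_by_def using bij_betw_inv_into[OF b] E' by simp
qed

lemma hg_iso_by_inner_nodes:
  assumes h: "hg_iso_by H H' f" and s: "hg_struct H"
  shows "f ` inner_nodes H = inner_nodes H'"
proof -
  have b: "bij_betw f (gV H) (gV H')" and x: "gext H' = map f (gext H)" using h unfolding hg_iso_by_def by auto
  have "set (gext H) \<subseteq> gV H" using s unfolding hg_struct_def by blast
  then have "f ` (gV H - set (gext H)) = f ` gV H - f ` set (gext H)"
    using bij_betw_imp_inj_on[OF b] by (intro inj_on_image_set_diff) auto
  then show ?thesis using b x unfolding inner_nodes_def bij_betw_def by simp
qed

lemma hg_iso_refl: "hg_iso G G"
  unfolding hg_iso_iff using hg_iso_by_refl by blast

lemma hg_iso_sym: "hg_struct G \<Longrightarrow> hg_iso G G' \<Longrightarrow> hg_iso G' G"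
  unfolding hg_iso_iff using hg_iso_by_sym by blast

section \<open>Replacement described by node embeddings\<close>

(* X arises from G by replacing the edges es i (i in I) by the graphs Hs i: phi and psi i embed G
   and Hs i into X, the external nodes of Hs i are sent to the attachment nodes of es i, and the
   remaining nodes of the Hs i are fresh. *)
definition is_repl :: "'l hgraph \<Rightarrow> 'l hgraph \<Rightarrow> 'i set \<Rightarrow> ('i \<Rightarrow> nat list \<times> 'l) \<Rightarrow> ('i \<Rightarrow> 'l hgraph)
   \<Rightarrow> (nat \<Rightarrow> nat) \<Rightarrow> ('i \<Rightarrow> nat \<Rightarrow> nat) \<Rightarrow> bool" where
 "is_repl X G I es Hs \<phi> \<psi> \<longleftrightarrow> finite I
   \<and> mset_family I es \<subseteq># mset (gE G)
   \<and> hg_struct G \<and> (\<forall>i\<in>I. hg_struct (Hs i))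
   \<and> inj_on \<phi> (gV G) \<and> (\<forall>i\<in>I. inj_on (\<psi> i) (gV (Hs i)))
   \<and> (\<forall>i\<in>I. map (\<psi> i) (gext (Hs i)) = map \<phi> (fst (es i)))
   \<and> (\<forall>i\<in>I. \<psi> i ` inner_nodes (Hs i) \<inter> \<phi> ` gV G = {})
   \<and> (\<forall>i\<in>I. \<forall>j\<in>I. i \<noteq> j \<longrightarrow> \<psi> i ` inner_nodes (Hs i) \<inter> \<psi> j ` inner_nodes (Hs j) = {})
   \<and> gV X = \<phi> ` gV G \<union> (\<Union>i\<in>I. \<psi> i ` gV (Hs i))
   \<and> mset (gE X) = image_mset (map_edge \<phi>) (mset (gE G) - mset_family I es)
        + (\<Sum>i\<in>I. image_mset (map_edge (\<psi> i)) (mset (gE (Hs i))))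
   \<and> gext X = map \<phi> (gext G)"

lemma is_replD:
  assumes "is_repl X G I es Hs \<phi> \<psi>"
  shows is_repl_finite: "finite I"
   and is_repl_subset: "mset_family I es \<subseteq># mset (gE G)"
   and is_repl_struct_base: "hg_struct G" and is_repl_struct_part: "\<And>i. i\<in>I \<Longrightarrow> hg_struct (Hs i)"
   and is_repl_inj_outer: "inj_on \<phi> (gV G)" and is_repl_inj_inner: "\<And>i. i\<in>I \<Longrightarrow> inj_on (\<psi> i) (gV (Hs i))"
   and is_repl_attach: "\<And>i. i\<in>I \<Longrightarrow> map (\<psi> i) (gext (Hs i)) = map \<phi> (fst (es i))"
   and is_repl_disjoint_outer: "\<And>i. i\<in>I \<Longrightarrow> \<psi> i ` inner_nodes (Hs i) \<inter> \<phi> ` gV G = {}"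
   and is_repl_disjoint_inner: "\<And>i j. i\<in>I \<Longrightarrow> j\<in>I \<Longrightarrow> i \<noteq> j \<Longrightarrow> \<psi> i ` inner_nodes (Hs i) \<inter> \<psi> j ` inner_nodes (Hs j) = {}"
   and is_repl_nodes: "gV X = \<phi> ` gV G \<union> (\<Union>i\<in>I. \<psi> i ` gV (Hs i))"
   and is_repl_edges: "mset (gE X) = image_mset (map_edge \<phi>) (mset (gE G) - mset_family I es)
        + (\<Sum>i\<in>I. image_mset (map_edge (\<psi> i)) (mset (gE (Hs i))))"
   and is_repl_gext: "gext X = map \<phi> (gext G)"
  using assms unfolding is_repl_def by simp_all

lemma is_replI:
  assumes "finite I" "mset_family I es \<subseteq># mset (gE G)" "hg_struct G" "\<And>i. i\<in>I \<Longrightarrow> hg_struct (Hs i)"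
    "inj_on \<phi> (gV G)" "\<And>i. i\<in>I \<Longrightarrow> inj_on (\<psi> i) (gV (Hs i))"
    "\<And>i. i\<in>I \<Longrightarrow> map (\<psi> i) (gext (Hs i)) = map \<phi> (fst (es i))"
    "\<And>i. i\<in>I \<Longrightarrow> \<psi> i ` inner_nodes (Hs i) \<inter> \<phi> ` gV G = {}"
    "\<And>i j. i\<in>I \<Longrightarrow> j\<in>I \<Longrightarrow> i \<noteq> j \<Longrightarrow> \<psi> i ` inner_nodes (Hs i) \<inter> \<psi> j ` inner_nodes (Hs j) = {}"
    "gV X = \<phi> ` gV G \<union> (\<Union>i\<in>I. \<psi> i ` gV (Hs i))"
    "mset (gE X) = image_mset (map_edge \<phi>) (mset (gE G) - mset_family I es)
        + (\<Sum>i\<in>I. image_mset (map_edge (\<psi> i)) (mset (gE (Hs i))))"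
    "gext X = map \<phi> (gext G)"
  shows "is_repl X G I es Hs \<phi> \<psi>"
  unfolding is_repl_def
  by (intro conjI ballI impI) (simp_all add: assms)

lemma is_repl_edge_mem:
  assumes "is_repl X G I es Hs \<phi> \<psi>" "i \<in> I"
  shows "es i \<in> set (gE G)"
proof -
  have m: "es i \<in># mset_family I es" by (rule mset_family_mem[OF is_repl_finite[OF assms(1)] assms(2)])
  have "es i \<in># mset (gE G)" by (rule mset_subset_eqD[OF is_repl_subset[OF assms(1)] m])
  then show ?thesis by simp
qed

lemma is_repl_mem_edges:
  assumes "is_repl X G I es Hs \<phi> \<psi>"
  shows "x \<in> set (gE X) \<longleftrightarrow> (\<exists>y. y \<in># mset (gE G) - mset_family I es \<and> x = map_edge \<phi> y)
     \<or> (\<exists>i\<in>I. \<exists>y\<in>set (gE (Hs i)). x = map_edge (\<psi> i) y)"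
proof -
  have "x \<in> set (gE X) \<longleftrightarrow> x \<in># mset (gE X)" by simp
  also have "\<dots> \<longleftrightarrow> x \<in># image_mset (map_edge \<phi>) (mset (gE G) - mset_family I es)
        \<or> (\<exists>i\<in>I. x \<in># image_mset (map_edge (\<psi> i)) (mset (gE (Hs i))))"
    unfolding is_repl_edges[OF assms] by (simp add: mem_sum_mset_iff[OF is_repl_finite[OF assms]])
  finally show ?thesis by (force simp: image_iff)
qed

lemma is_repl_edge_kept:
  assumes "is_repl X G I es Hs \<phi> \<psi>" "y \<in># mset (gE G) - mset_family I es"
  shows "\<exists>i<length (gE X). gE X ! i = map_edge \<phi> y"
proof -
  have "map_edge \<phi> y \<in> set (gE X)" using is_repl_mem_edges[OF assms(1)] assms(2) by blast
  then show ?thesis by (metis in_set_conv_nth)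
qed

lemma is_repl_edge_inserted:
  assumes "is_repl X G I es Hs \<phi> \<psi>" "k \<in> I" "y \<in> set (gE (Hs k))"
  shows "\<exists>i<length (gE X). gE X ! i = map_edge (\<psi> k) y"
proof -
  have "map_edge (\<psi> k) y \<in> set (gE X)" using is_repl_mem_edges[OF assms(1)] assms(2,3) by blast
  then show ?thesis by (metis in_set_conv_nth)
qed

lemma is_repl_ext_subset:
  assumes "is_repl X G I es Hs \<phi> \<psi>" "i \<in> I"
  shows "\<psi> i ` set (gext (Hs i)) \<subseteq> \<phi> ` gV G"
proof -
  have "\<psi> i ` set (gext (Hs i)) = set (map \<phi> (fst (es i)))"
    using is_repl_attach[OF assms] by (metis set_map)
  also have "\<dots> \<subseteq> \<phi> ` gV G" using hg_struct_edge[OF is_repl_struct_base[OF assms(1)] is_repl_edge_mem[OF assms]]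
    by auto
  finally show ?thesis .
qed

lemma is_repl_outer_subset: "is_repl X G I es Hs \<phi> \<psi> \<Longrightarrow> \<phi> ` gV G \<subseteq> gV X"
  using is_repl_nodes by blast

lemma is_repl_inner_subset: "is_repl X G I es Hs \<phi> \<psi> \<Longrightarrow> i \<in> I \<Longrightarrow> \<psi> i ` gV (Hs i) \<subseteq> gV X"
  using is_repl_nodes by blast

lemma is_repl_node_cases:
  assumes d: "is_repl X G I es Hs \<phi> \<psi>" and z: "z \<in> gV X"
  shows "(\<exists>v\<in>gV G. z = \<phi> v) \<or> (\<exists>i\<in>I. \<exists>w\<in>inner_nodes (Hs i). z = \<psi> i w)"
proof -
  from z consider "z \<in> \<phi> ` gV G" | i where "i \<in> I" "z \<in> \<psi> i ` gV (Hs i)"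
    unfolding is_repl_nodes[OF d] by blast
  then show ?thesis
  proof cases
    case 1 then show ?thesis by blast
  next
    case 2
    then obtain w where w: "w \<in> gV (Hs i)" "z = \<psi> i w" by blast
    show ?thesis
    proof (cases "w \<in> set (gext (Hs i))")
      case True
      then have "z \<in> \<phi> ` gV G" using is_repl_ext_subset[OF d 2(1)] w by blast
      then show ?thesis by blast
    next
      case False
      then have "w \<in> inner_nodes (Hs i)" using w unfolding inner_nodes_def by blast
      then show ?thesis using 2(1) w by blast
    qed
  qed
qed

lemma is_repl_ext_nth:
  assumes d: "is_repl X G I es Hs \<phi> \<psi>" and i: "i \<in> I" and m: "m < length (gext (Hs i))"
  shows "\<psi> i (gext (Hs i) ! m) = \<phi> (fst (es i) ! m)" "m < length (fst (es i))"
    "fst (es i) ! m \<in> gV G"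
proof -
  have e: "map (\<psi> i) (gext (Hs i)) = map \<phi> (fst (es i))" by (rule is_repl_attach[OF d i])
  then have l: "length (fst (es i)) = length (gext (Hs i))" by (metis length_map)
  show "\<psi> i (gext (Hs i) ! m) = \<phi> (fst (es i) ! m)" using e m l by (metis nth_map)
  show "m < length (fst (es i))" using l m by simp
  show "fst (es i) ! m \<in> gV G"
    using hg_struct_edge_subset[OF is_repl_struct_base[OF d] is_repl_edge_mem[OF d i]] l m by auto
qed

lemma is_repl_hg_struct:
  assumes d: "is_repl X G I es Hs \<phi> \<psi>"
  shows "hg_struct X"
proof -
  have fin: "finite I" and sG: "hg_struct G" and sH: "\<forall>i\<in>I. hg_struct (Hs i)"
    and iphi: "inj_on \<phi> (gV G)" and ipsi: "\<forall>i\<in>I. inj_on (\<psi> i) (gV (Hs i))"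
    and V: "gV X = \<phi> ` gV G \<union> (\<Union>i\<in>I. \<psi> i ` gV (Hs i))"
    and x: "gext X = map \<phi> (gext G)"
    using is_replD[OF d] by auto
  have "finite (gV X)" using V fin sG sH unfolding hg_struct_def by auto
  moreover have "\<forall>(a, l)\<in>set (gE X). distinct a \<and> set a \<subseteq> gV X"
  proof (clarify)
    fix a l assume al: "(a, l) \<in> set (gE X)"
    from al[unfolded is_repl_mem_edges[OF d]] show "distinct a \<and> set a \<subseteq> gV X"
    proof
      assume "\<exists>y. y \<in># mset (gE G) - mset_family I es \<and> (a, l) = map_edge \<phi> y"
      then obtain y where y: "y \<in> set (gE G)" "(a, l) = map_edge \<phi> y"
        by (metis in_diffD set_mset_mset)
      with hg_struct_edge[OF sG y(1)] iphi show ?thesis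
        by (auto simp: V distinct_map map_edge_def intro: inj_on_subset)
    next
      assume "\<exists>i\<in>I. \<exists>y\<in>set (gE (Hs i)). (a, l) = map_edge (\<psi> i) y"
      then obtain i y where y: "i \<in> I" "y \<in> set (gE (Hs i))" "(a, l) = map_edge (\<psi> i) y" by blast
      have s: "distinct (fst y) \<and> set (fst y) \<subseteq> gV (Hs i)" using hg_struct_edge[OF _ y(2)] sH y(1) by blast
      have sub: "\<psi> i ` gV (Hs i) \<subseteq> gV X" using V y(1) by blast
      have "distinct a" using s y ipsi by (auto simp: distinct_map map_edge_def intro: inj_on_subset)
      moreover have "set a \<subseteq> gV X" using s y sub by (auto simp: map_edge_def)
      ultimately show ?thesis by blast
    qed
  qed
  moreover have "distinct (gext X) \<and> set (gext X) \<subseteq> gV X"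
    using sG iphi unfolding x V hg_struct_def by (auto simp: distinct_map intro: inj_on_subset)
  ultimately show ?thesis unfolding hg_struct_def by blast
qed

lemma is_repl_cong:
  assumes d: "is_repl X G I es Hs \<phi> \<psi>"
    and c1: "\<And>i. i \<in> I \<Longrightarrow> es' i = es i" and c2: "\<And>i. i \<in> I \<Longrightarrow> Hs' i = Hs i"
    and c3: "\<And>i. i \<in> I \<Longrightarrow> \<psi>' i = \<psi> i"
  shows "is_repl X G I es' Hs' \<phi> \<psi>'"
proof (rule is_replI)
  have es: "mset_family I es' = mset_family I es" unfolding mset_family_def by (rule sum.cong) (auto simp: c1)
  show "finite I" by (rule is_repl_finite[OF d])
  show "mset_family I es' \<subseteq># mset (gE G)" unfolding es by (rule is_repl_subset[OF d])
  show "hg_struct G" by (rule is_repl_struct_base[OF d])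
  show "hg_struct (Hs' i)" if "i \<in> I" for i using is_repl_struct_part[OF d that] c2[OF that] by simp
  show "inj_on \<phi> (gV G)" by (rule is_repl_inj_outer[OF d])
  show "inj_on (\<psi>' i) (gV (Hs' i))" if "i \<in> I" for i using is_repl_inj_inner[OF d that] c2[OF that] c3[OF that] by simp
  show "map (\<psi>' i) (gext (Hs' i)) = map \<phi> (fst (es' i))" if "i \<in> I" for i
    using is_repl_attach[OF d that] c1[OF that] c2[OF that] c3[OF that] by simp
  show "\<psi>' i ` inner_nodes (Hs' i) \<inter> \<phi> ` gV G = {}" if "i \<in> I" for i
    using is_repl_disjoint_outer[OF d that] c2[OF that] c3[OF that] by simp
  show "\<psi>' i ` inner_nodes (Hs' i) \<inter> \<psi>' j ` inner_nodes (Hs' j) = {}" if "i \<in> I" "j \<in> I" "i \<noteq> j" for i j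
    using is_repl_disjoint_inner[OF d that] c2[OF that(1)] c3[OF that(1)] c2[OF that(2)] c3[OF that(2)] by simp
  have "(\<Union>i\<in>I. \<psi>' i ` gV (Hs' i)) = (\<Union>i\<in>I. \<psi> i ` gV (Hs i))"
    by (rule SUP_cong[OF refl]) (simp add: c2 c3)
  then show "gV X = \<phi> ` gV G \<union> (\<Union>i\<in>I. \<psi>' i ` gV (Hs' i))" using is_repl_nodes[OF d] by simp
  have "(\<Sum>i\<in>I. image_mset (map_edge (\<psi>' i)) (mset (gE (Hs' i)))) = (\<Sum>i\<in>I. image_mset (map_edge (\<psi> i)) (mset (gE (Hs i))))"
    by (rule sum.cong[OF refl]) (simp add: c2 c3)
  then show "mset (gE X) = image_mset (map_edge \<phi>) (mset (gE G) - mset_family I es')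
        + (\<Sum>i\<in>I. image_mset (map_edge (\<psi>' i)) (mset (gE (Hs' i))))" using is_repl_edges[OF d] es by simp
  show "gext X = map \<phi> (gext G)" by (rule is_repl_gext[OF d])
qed

lemma is_repl_reindex:
  assumes d: "is_repl X G I es Hs \<phi> \<psi>" and t: "bij_betw \<tau> I' I"
  shows "is_repl X G I' (es \<circ> \<tau>) (Hs \<circ> \<tau>) \<phi> (\<psi> \<circ> \<tau>)"
proof (rule is_replI)
  have im: "\<tau> ` I' = I" and it: "inj_on \<tau> I'" using t by (auto simp: bij_betw_def)
  show "finite I'" using is_repl_finite[OF d] t bij_betw_finite by blast
  have es: "mset_family I' (es \<circ> \<tau>) = mset_family I es" unfolding mset_family_def
    using sum.reindex_bij_betw[OF t, of "\<lambda>i. {#es i#}"] by simp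
  show "mset_family I' (es \<circ> \<tau>) \<subseteq># mset (gE G)" unfolding es by (rule is_repl_subset[OF d])
  show "hg_struct G" by (rule is_repl_struct_base[OF d])
  show "hg_struct ((Hs \<circ> \<tau>) i)" if "i \<in> I'" for i using is_repl_struct_part[OF d] that im by auto
  show "inj_on \<phi> (gV G)" by (rule is_repl_inj_outer[OF d])
  show "inj_on ((\<psi> \<circ> \<tau>) i) (gV ((Hs \<circ> \<tau>) i))" if "i \<in> I'" for i using is_repl_inj_inner[OF d] that im by auto
  show "map ((\<psi> \<circ> \<tau>) i) (gext ((Hs \<circ> \<tau>) i)) = map \<phi> (fst ((es \<circ> \<tau>) i))" if "i \<in> I'" for i
    using is_repl_attach[OF d] that im by auto
  show "(\<psi> \<circ> \<tau>) i ` inner_nodes ((Hs \<circ> \<tau>) i) \<inter> \<phi> ` gV G = {}" if "i \<in> I'" for i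
    using is_repl_disjoint_outer[OF d] that im by auto
  show "(\<psi> \<circ> \<tau>) i ` inner_nodes ((Hs \<circ> \<tau>) i) \<inter> (\<psi> \<circ> \<tau>) j ` inner_nodes ((Hs \<circ> \<tau>) j) = {}"
    if "i \<in> I'" "j \<in> I'" "i \<noteq> j" for i j
  proof -
    have "\<tau> i \<noteq> \<tau> j" using it that by (meson inj_on_eq_iff)
    then show ?thesis using is_repl_disjoint_inner[OF d, of "\<tau> i" "\<tau> j"] that im by auto
  qed
  have "(\<Union>i\<in>I'. (\<psi> \<circ> \<tau>) i ` gV ((Hs \<circ> \<tau>) i)) = (\<Union>j\<in>\<tau> ` I'. \<psi> j ` gV (Hs j))" by auto
  then show "gV X = \<phi> ` gV G \<union> (\<Union>i\<in>I'. (\<psi> \<circ> \<tau>) i ` gV ((Hs \<circ> \<tau>) i))"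
    unfolding is_repl_nodes[OF d] im by simp
  show "mset (gE X) = image_mset (map_edge \<phi>) (mset (gE G) - mset_family I' (es \<circ> \<tau>))
        + (\<Sum>i\<in>I'. image_mset (map_edge ((\<psi> \<circ> \<tau>) i)) (mset (gE ((Hs \<circ> \<tau>) i))))"
    unfolding es is_repl_edges[OF d]
    using sum.reindex_bij_betw[OF t, of "\<lambda>i. image_mset (map_edge (\<psi> i)) (mset (gE (Hs i)))"] by simp
  show "gext X = map \<phi> (gext G)" by (rule is_repl_gext[OF d])
qed

lemma is_repl_singleton_reindex:
  assumes "is_repl X G {e} es Hs \<phi> \<psi>"
  shows "is_repl X G {i} (\<lambda>_. es e) (\<lambda>_. Hs e) \<phi> (\<lambda>_. \<psi> e)"
  using is_repl_reindex[OF assms, of "\<lambda>_. e" "{i}"] by (simp add: comp_def bij_betw_def)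

lemma is_repl_hg_iso_by:
  assumes s: "hg_struct G" and h: "hg_iso_by G G' f"
  shows "is_repl G' G ({}::nat set) (\<lambda>_. undefined) (\<lambda>_. G) f (\<lambda>_. id)"
proof (rule is_replI)
  show "inj_on f (gV G)" using h unfolding hg_iso_by_def bij_betw_def by blast
  show "gV G' = f ` gV G \<union> (\<Union>i\<in>{}. id ` gV G)" using h unfolding hg_iso_by_def bij_betw_def by simp
  show "mset (gE G') = image_mset (map_edge f) (mset (gE G) - mset_family {} (\<lambda>_. undefined))
      + (\<Sum>i\<in>{}. image_mset (map_edge id) (mset (gE G)))" using h unfolding hg_iso_by_def by (simp add: mset_family_def)
  show "gext G' = map f (gext G)" using h unfolding hg_iso_by_def by simp
qed (use s in \<open>auto simp: mset_family_def\<close>)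

lemma is_repl_comp_inj:
  assumes d: "is_repl Y G I es Hs \<phi> \<psi>" and f: "inj_on f (gV Y)"
  shows "inj_on (f \<circ> \<phi>) (gV G)"
    and "i \<in> I \<Longrightarrow> inj_on (f \<circ> \<psi> i) (gV (Hs i))"
    and "i \<in> I \<Longrightarrow> map (f \<circ> \<psi> i) (gext (Hs i)) = map (f \<circ> \<phi>) (fst (es i))"
    and "i \<in> I \<Longrightarrow> (f \<circ> \<psi> i) ` inner_nodes (Hs i) \<inter> (f \<circ> \<phi>) ` gV G = {}"
    and "i \<in> I \<Longrightarrow> i' \<in> I \<Longrightarrow> i \<noteq> i' \<Longrightarrow> (f \<circ> \<psi> i) ` inner_nodes (Hs i) \<inter> (f \<circ> \<psi> i') ` inner_nodes (Hs i') = {}"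
proof -
  have GY: "\<phi> ` gV G \<subseteq> gV Y" and HY: "\<And>i. i \<in> I \<Longrightarrow> \<psi> i ` gV (Hs i) \<subseteq> gV Y"
    unfolding is_repl_nodes[OF d] by blast+
  then have HY': "\<And>i. i \<in> I \<Longrightarrow> \<psi> i ` inner_nodes (Hs i) \<subseteq> gV Y" using inner_nodes_subset by blast
  show "inj_on (f \<circ> \<phi>) (gV G)" using is_repl_inj_outer[OF d] f GY by (auto intro: comp_inj_on inj_on_subset)
  assume i: "i \<in> I"
  show "inj_on (f \<circ> \<psi> i) (gV (Hs i))" using is_repl_inj_inner[OF d i] f HY[OF i] by (auto intro: comp_inj_on inj_on_subset)
  show "map (f \<circ> \<psi> i) (gext (Hs i)) = map (f \<circ> \<phi>) (fst (es i))"
    using arg_cong[OF is_repl_attach[OF d i], of "map f"] by simp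
  show "(f \<circ> \<psi> i) ` inner_nodes (Hs i) \<inter> (f \<circ> \<phi>) ` gV G = {}"
    using inj_on_image_disjoint[OF f HY'[OF i] GY is_repl_disjoint_outer[OF d i]] by (simp add: image_comp)
  assume "i' \<in> I" "i \<noteq> i'"
  then show "(f \<circ> \<psi> i) ` inner_nodes (Hs i) \<inter> (f \<circ> \<psi> i') ` inner_nodes (Hs i') = {}"
    using inj_on_image_disjoint[OF f HY'[OF i] HY'[of i'] is_repl_disjoint_inner[OF d i]] by (simp add: image_comp)
qed

definition glue_map :: "'l hgraph \<Rightarrow> 'i set \<Rightarrow> ('i \<Rightarrow> 'l hgraph) \<Rightarrow> (nat \<Rightarrow> nat) \<Rightarrow> ('i \<Rightarrow> nat \<Rightarrow> nat)
   \<Rightarrow> (nat \<Rightarrow> nat) \<Rightarrow> ('i \<Rightarrow> nat \<Rightarrow> nat) \<Rightarrow> nat \<Rightarrow> nat" where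
  "glue_map G I Hs \<phi> \<psi> \<alpha> \<beta> z = (if z \<in> \<phi> ` gV G then \<alpha> (inv_into (gV G) \<phi> z)
     else (let i = (SOME i. i \<in> I \<and> z \<in> \<psi> i ` inner_nodes (Hs i)) in \<beta> i (inv_into (inner_nodes (Hs i)) (\<psi> i) z)))"

lemma glue_map_outer:
  assumes d: "is_repl X G I es Hs \<phi> \<psi>" and v: "v \<in> gV G"
  shows "glue_map G I Hs \<phi> \<psi> \<alpha> \<beta> (\<phi> v) = \<alpha> v"
  using v inv_into_f_f[OF is_repl_inj_outer[OF d] v] by (simp add: glue_map_def)

lemma glue_map_inner_node:
  assumes d: "is_repl X G I es Hs \<phi> \<psi>" and i: "i \<in> I" and w: "w \<in> inner_nodes (Hs i)"
  shows "glue_map G I Hs \<phi> \<psi> \<alpha> \<beta> (\<psi> i w) = \<beta> i w"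
proof -
  have n: "\<psi> i w \<notin> \<phi> ` gV G" using is_repl_disjoint_outer[OF d i] w by blast
  have u: "(SOME j. j \<in> I \<and> \<psi> i w \<in> \<psi> j ` inner_nodes (Hs j)) = i"
  proof (rule some_equality)
    show "i \<in> I \<and> \<psi> i w \<in> \<psi> i ` inner_nodes (Hs i)" using i w by blast
  next
    fix j assume "j \<in> I \<and> \<psi> i w \<in> \<psi> j ` inner_nodes (Hs j)"
    then show "j = i" using is_repl_disjoint_inner[OF d i, of j] w by blast
  qed
  have "inj_on (\<psi> i) (inner_nodes (Hs i))"
    using is_repl_inj_inner[OF d i] by (rule inj_on_subset) (auto simp: inner_nodes_def)
  then have "inv_into (inner_nodes (Hs i)) (\<psi> i) (\<psi> i w) = w" using w by (rule inv_into_f_f)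
  then show ?thesis using n u by (simp add: glue_map_def Let_def)
qed

lemma glue_map_inner:
  assumes d: "is_repl X G I es Hs \<phi> \<psi>" and i: "i \<in> I" and w: "w \<in> gV (Hs i)"
    and compat: "map (\<beta> i) (gext (Hs i)) = map \<alpha> (fst (es i))"
  shows "glue_map G I Hs \<phi> \<psi> \<alpha> \<beta> (\<psi> i w) = \<beta> i w"
proof (cases "w \<in> set (gext (Hs i))")
  case True
  then obtain m where m: "m < length (gext (Hs i))" "w = gext (Hs i) ! m" by (metis in_set_conv_nth)
  note p = is_repl_ext_nth[OF d i m(1)]
  have "glue_map G I Hs \<phi> \<psi> \<alpha> \<beta> (\<psi> i w) = \<alpha> (fst (es i) ! m)"
    using m p glue_map_outer[OF d p(3)] by simp
  also have "\<dots> = \<beta> i w" using compat m p(2) by (metis nth_map)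
  finally show ?thesis .
next
  case False
  then show ?thesis using glue_map_inner_node[OF d i] w by (simp add: inner_nodes_def)
qed

lemma glue_map_image:
  assumes d: "is_repl X G I es Hs \<phi> \<psi>"
    and compat: "\<And>i. i \<in> I \<Longrightarrow> map (\<beta> i) (gext (Hs i)) = map \<alpha> (fst (es i))"
  shows "glue_map G I Hs \<phi> \<psi> \<alpha> \<beta> ` gV X = \<alpha> ` gV G \<union> (\<Union>i\<in>I. \<beta> i ` gV (Hs i))"
proof -
  let ?h = "glue_map G I Hs \<phi> \<psi> \<alpha> \<beta>"
  have "?h ` gV X = ?h ` \<phi> ` gV G \<union> (\<Union>i\<in>I. ?h ` \<psi> i ` gV (Hs i))"
    unfolding is_repl_nodes[OF d] by (simp add: image_Un image_UN)
  also have "?h ` \<phi> ` gV G = \<alpha> ` gV G"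
    using glue_map_outer[OF d] by (simp add: image_image cong: image_cong)
  also have "(\<Union>i\<in>I. ?h ` \<psi> i ` gV (Hs i)) = (\<Union>i\<in>I. \<beta> i ` gV (Hs i))"
  proof (rule SUP_cong[OF refl])
    fix i assume i: "i \<in> I"
    have "\<And>w. w \<in> gV (Hs i) \<Longrightarrow> ?h (\<psi> i w) = \<beta> i w"
      using glue_map_inner[OF d i] compat[OF i] by blast
    then show "?h ` \<psi> i ` gV (Hs i) = \<beta> i ` gV (Hs i)"
      unfolding image_image by (rule image_cong[OF refl])
  qed
  finally show ?thesis .
qed

lemma glue_map_inner_nodes:
  assumes d: "is_repl X G I es Hs \<phi> \<psi>"
  shows "glue_map G I Hs \<phi> \<psi> \<alpha> \<beta> ` inner_nodes X \<subseteq> \<alpha> ` inner_nodes G \<union> (\<Union>i\<in>I. \<beta> i ` inner_nodes (Hs i))"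
proof
  fix y assume "y \<in> glue_map G I Hs \<phi> \<psi> \<alpha> \<beta> ` inner_nodes X"
  then obtain z where z: "z \<in> inner_nodes X" "y = glue_map G I Hs \<phi> \<psi> \<alpha> \<beta> z" by blast
  then have zV: "z \<in> gV X" and zx: "z \<notin> set (gext X)" unfolding inner_nodes_def by auto
  from is_repl_node_cases[OF d zV] show "y \<in> \<alpha> ` inner_nodes G \<union> (\<Union>i\<in>I. \<beta> i ` inner_nodes (Hs i))"
  proof
    assume "\<exists>v\<in>gV G. z = \<phi> v"
    then obtain v where v: "v \<in> gV G" "z = \<phi> v" by blast
    have "v \<notin> set (gext G)" using zx v unfolding is_repl_gext[OF d] by auto
    then have "v \<in> inner_nodes G" using v unfolding inner_nodes_def by blast
    then show ?thesis using z v glue_map_outer[OF d v(1)] by auto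
  next
    assume "\<exists>i\<in>I. \<exists>w\<in>inner_nodes (Hs i). z = \<psi> i w"
    then obtain i w where "i \<in> I" "w \<in> inner_nodes (Hs i)" "z = \<psi> i w" by blast
    then show ?thesis using z glue_map_inner_node[OF d] by auto
  qed
qed

lemma inj_on_glue_map:
  assumes d: "is_repl X G I es Hs \<phi> \<psi>"
    and compat: "\<And>i. i \<in> I \<Longrightarrow> map (\<beta> i) (gext (Hs i)) = map \<alpha> (fst (es i))"
    and ia: "inj_on \<alpha> (gV G)" and ib: "\<And>i. i \<in> I \<Longrightarrow> inj_on (\<beta> i) (gV (Hs i))"
    and d1: "\<And>i. i \<in> I \<Longrightarrow> \<beta> i ` inner_nodes (Hs i) \<inter> \<alpha> ` gV G = {}"
    and d2: "\<And>i j. i \<in> I \<Longrightarrow> j \<in> I \<Longrightarrow> i \<noteq> j \<Longrightarrow> \<beta> i ` inner_nodes (Hs i) \<inter> \<beta> j ` inner_nodes (Hs j) = {}"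
  shows "inj_on (glue_map G I Hs \<phi> \<psi> \<alpha> \<beta>) (gV X)"
proof
  let ?h = "glue_map G I Hs \<phi> \<psi> \<alpha> \<beta>"
  fix z1 z2 assume z: "z1 \<in> gV X" "z2 \<in> gV X" "?h z1 = ?h z2"
  have intV: "inner_nodes (Hs i) \<subseteq> gV (Hs i)" for i unfolding inner_nodes_def by blast
  from is_repl_node_cases[OF d z(1)] is_repl_node_cases[OF d z(2)] show "z1 = z2"
  proof (elim disjE bexE)
    fix v1 v2 assume v: "v1 \<in> gV G" "z1 = \<phi> v1" "v2 \<in> gV G" "z2 = \<phi> v2"
    then have "\<alpha> v1 = \<alpha> v2" using z glue_map_outer[OF d] by simp
    then show ?thesis using v ia by (simp add: inj_on_eq_iff)
  next
    fix v1 i2 w2 assume v: "v1 \<in> gV G" "z1 = \<phi> v1" "i2 \<in> I" "w2 \<in> inner_nodes (Hs i2)" "z2 = \<psi> i2 w2"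
    then have "\<alpha> v1 = \<beta> i2 w2" using z glue_map_outer[OF d] glue_map_inner_node[OF d] by simp
    then show ?thesis using v d1[of i2] by blast
  next
    fix v2 i1 w1 assume v: "v2 \<in> gV G" "z2 = \<phi> v2" "i1 \<in> I" "w1 \<in> inner_nodes (Hs i1)" "z1 = \<psi> i1 w1"
    then have "\<alpha> v2 = \<beta> i1 w1" using z glue_map_outer[OF d] glue_map_inner_node[OF d] by simp
    then show ?thesis using v d1[of i1] by blast
  next
    fix i1 w1 i2 w2 assume v: "i1 \<in> I" "w1 \<in> inner_nodes (Hs i1)" "z1 = \<psi> i1 w1"
      "i2 \<in> I" "w2 \<in> inner_nodes (Hs i2)" "z2 = \<psi> i2 w2"
    then have e: "\<beta> i1 w1 = \<beta> i2 w2" using z glue_map_inner_node[OF d] by simp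
    show ?thesis
    proof (cases "i1 = i2")
      case True
      then have "w1 = w2" using e v ib[of i1] intV by (metis inj_on_eq_iff subsetD)
      then show ?thesis using v True by simp
    next
      case False
      then show ?thesis using e v d2[of i1 i2] by blast
    qed
  qed
qed

lemma glue_map_edges:
  assumes d: "is_repl X G I es Hs \<phi> \<psi>"
    and compat: "\<And>i. i \<in> I \<Longrightarrow> map (\<beta> i) (gext (Hs i)) = map \<alpha> (fst (es i))"
  shows "image_mset (map_edge (glue_map G I Hs \<phi> \<psi> \<alpha> \<beta>)) (mset (gE X))
     = image_mset (map_edge \<alpha>) (mset (gE G) - mset_family I es) + (\<Sum>i\<in>I. image_mset (map_edge (\<beta> i)) (mset (gE (Hs i))))"
proof -
  let ?h = "glue_map G I Hs \<phi> \<psi> \<alpha> \<beta>"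
  have "image_mset (map_edge ?h) (mset (gE X)) = image_mset (map_edge ?h) (image_mset (map_edge \<phi>) (mset (gE G) - mset_family I es))
        + (\<Sum>i\<in>I. image_mset (map_edge ?h) (image_mset (map_edge (\<psi> i)) (mset (gE (Hs i)))))"
    unfolding is_repl_edges[OF d] by (simp add: image_mset_sum)
  also have "image_mset (map_edge ?h) (image_mset (map_edge \<phi>) (mset (gE G) - mset_family I es))
      = image_mset (map_edge \<alpha>) (mset (gE G) - mset_family I es)"
  proof -
    have "set (fst e) \<subseteq> gV G" if "e \<in># mset (gE G) - mset_family I es" for e
    proof -
      have "e \<in> set (gE G)" using that by (metis in_diffD set_mset_mset)
      then show ?thesis by (rule hg_struct_edge_subset[OF is_repl_struct_base[OF d]])
    qed
    then show ?thesis unfolding image_mset_map_edge_comp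
      by (rule image_mset_map_edge_cong[where A = "gV G"]) (use glue_map_outer[OF d] in auto)
  qed
  also have "(\<Sum>i\<in>I. image_mset (map_edge ?h) (image_mset (map_edge (\<psi> i)) (mset (gE (Hs i)))))
      = (\<Sum>i\<in>I. image_mset (map_edge (\<beta> i)) (mset (gE (Hs i))))"
  proof (rule sum.cong[OF refl])
    fix i assume i: "i \<in> I"
    show "image_mset (map_edge ?h) (image_mset (map_edge (\<psi> i)) (mset (gE (Hs i)))) = image_mset (map_edge (\<beta> i)) (mset (gE (Hs i)))"
    proof -
      have hw: "\<And>w. w \<in> gV (Hs i) \<Longrightarrow> ?h (\<psi> i w) = \<beta> i w"
        using glue_map_inner[OF d i] compat[OF i] by blast
      show ?thesis unfolding image_mset_map_edge_comp
        by (rule image_mset_map_edge_cong[where A = "gV (Hs i)"])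
           (use hg_struct_edge_subset[OF is_repl_struct_part[OF d i]] hw in auto)
    qed
  qed
  finally show ?thesis .
qed

lemma is_repl_unique:
  assumes d: "is_repl X G I es Hs \<phi> \<psi>" and d': "is_repl X' G I es Hs \<phi>' \<psi>'"
  shows "hg_iso X X'"
proof -
  let ?h = "glue_map G I Hs \<phi> \<psi> \<phi>' \<psi>'"
  have compat: "map (\<psi>' i) (gext (Hs i)) = map \<phi>' (fst (es i))" if "i \<in> I" for i
    by (rule is_repl_attach[OF d' that])
  have "inj_on ?h (gV X)"
    by (rule inj_on_glue_map[OF d compat is_repl_inj_outer[OF d'] is_repl_inj_inner[OF d']
          is_repl_disjoint_outer[OF d'] is_repl_disjoint_inner[OF d']])
  moreover have "?h ` gV X = gV X'"
    unfolding is_repl_nodes[OF d'] by (rule glue_map_image[OF d compat])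
  moreover have "mset (gE X') = image_mset (map_edge ?h) (mset (gE X))"
    unfolding is_repl_edges[OF d'] by (rule glue_map_edges[OF d compat, symmetric])
  moreover have "gext X' = map ?h (gext X)"
    using glue_map_outer[OF d] is_repl_struct_base[OF d]
    unfolding is_repl_gext[OF d] is_repl_gext[OF d'] hg_struct_def by auto
  ultimately have "hg_iso_by X X' ?h" unfolding hg_iso_by_def bij_betw_def by blast
  then show ?thesis unfolding hg_iso_iff by blast
qed

lemma is_repl_transfer:
  assumes d: "is_repl X G I es Hs \<phi> \<psi>" and d': "is_repl X' G' I es' Hs' \<phi>' \<psi>'"
    and g: "hg_iso_by G G' g" and ee: "\<And>i. i \<in> I \<Longrightarrow> es' i = map_edge g (es i)"
    and hh: "\<And>i. i \<in> I \<Longrightarrow> hg_iso_by (Hs i) (Hs' i) (f i)"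
  shows "is_repl X' G I es Hs (\<phi>' \<circ> g) (\<lambda>i. \<psi>' i \<circ> f i)"
proof (rule is_replI)
  have gb: "bij_betw g (gV G) (gV G')" and gE': "mset (gE G') = image_mset (map_edge g) (mset (gE G))"
    and gx: "gext G' = map g (gext G)" using g unfolding hg_iso_by_def by auto
  have fb: "bij_betw (f i) (gV (Hs i)) (gV (Hs' i))"
    and fE: "mset (gE (Hs' i)) = image_mset (map_edge (f i)) (mset (gE (Hs i)))"
    and fx: "gext (Hs' i) = map (f i) (gext (Hs i))" if "i \<in> I" for i
    using hh[OF that] unfolding hg_iso_by_def by auto
  have gimg: "(\<phi>' \<circ> g) ` gV G = \<phi>' ` gV G'" using gb by (metis bij_betw_imp_surj_on image_comp)
  have fimg: "(\<psi>' i \<circ> f i) ` gV (Hs i) = \<psi>' i ` gV (Hs' i)"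
    and fint: "(\<psi>' i \<circ> f i) ` inner_nodes (Hs i) = \<psi>' i ` inner_nodes (Hs' i)" if "i \<in> I" for i
    using fb[OF that] hg_iso_by_inner_nodes[OF hh[OF that] is_repl_struct_part[OF d that]]
    by (metis bij_betw_imp_surj_on image_comp)+
  have sub: "mset_family I es \<subseteq># mset (gE G)" by (rule is_repl_subset[OF d])
  have es': "mset_family I es' = image_mset (map_edge g) (mset_family I es)"
    by (rule mset_family_map_edge) (rule ee)
  show "finite I" "mset_family I es \<subseteq># mset (gE G)" "hg_struct G"
    using d by (simp_all add: is_repl_finite is_repl_subset is_repl_struct_base)
  show "inj_on (\<phi>' \<circ> g) (gV G)"
    using gb is_repl_inj_outer[OF d'] by (auto simp: bij_betw_def intro: comp_inj_on)
  show "gV X' = (\<phi>' \<circ> g) ` gV G \<union> (\<Union>i\<in>I. (\<psi>' i \<circ> f i) ` gV (Hs i))"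
    unfolding is_repl_nodes[OF d'] gimg using fimg by simp
  show "mset (gE X') = image_mset (map_edge (\<phi>' \<circ> g)) (mset (gE G) - mset_family I es)
      + (\<Sum>i\<in>I. image_mset (map_edge (\<psi>' i \<circ> f i)) (mset (gE (Hs i))))"
    unfolding is_repl_edges[OF d'] gE' es' image_mset_Diff[OF sub, symmetric] image_mset_map_edge_comp
    by (simp add: fE image_mset_map_edge_comp cong: sum.cong)
  show "gext X' = map (\<phi>' \<circ> g) (gext G)" using is_repl_gext[OF d'] gx by simp
  fix i assume i: "i \<in> I"
  show "hg_struct (Hs i)" by (rule is_repl_struct_part[OF d i])
  show "inj_on (\<psi>' i \<circ> f i) (gV (Hs i))"
    using fb[OF i] is_repl_inj_inner[OF d' i] by (auto simp: bij_betw_def intro: comp_inj_on)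
  show "map (\<psi>' i \<circ> f i) (gext (Hs i)) = map (\<phi>' \<circ> g) (fst (es i))"
    using is_repl_attach[OF d' i] fx[OF i] ee[OF i] by simp
  show "(\<psi>' i \<circ> f i) ` inner_nodes (Hs i) \<inter> (\<phi>' \<circ> g) ` gV G = {}"
    unfolding fint[OF i] gimg by (rule is_repl_disjoint_outer[OF d' i])
  fix j assume j: "j \<in> I" "i \<noteq> j"
  show "(\<psi>' i \<circ> f i) ` inner_nodes (Hs i) \<inter> (\<psi>' j \<circ> f j) ` inner_nodes (Hs j) = {}"
    unfolding fint[OF i] fint[OF j(1)] by (rule is_repl_disjoint_inner[OF d' i j])
qed

lemma is_repl_hg_iso:
  assumes d: "is_repl X G I es Hs \<phi> \<psi>" and d': "is_repl X' G' I es' Hs' \<phi>' \<psi>'"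
    and g: "hg_iso_by G G' g" and ee: "\<And>i. i \<in> I \<Longrightarrow> es' i = map_edge g (es i)"
    and hh: "\<And>i. i \<in> I \<Longrightarrow> hg_iso_by (Hs i) (Hs' i) (f i)"
  shows "hg_iso X X'"
proof (rule is_repl_unique[OF d])
  show "is_repl X' G I es Hs (\<phi>' \<circ> g) (\<lambda>i. \<psi>' i \<circ> f i)"
    by (rule is_repl_transfer[OF d d' g]) (simp_all add: ee hh)
qed

section \<open>Composition of replacements\<close>

lemma is_repl_compose_disjoint:
  assumes d1: "is_repl Y G I es Hs \<phi> \<psi>" and d2: "is_repl X Y J fs Ks \<phi>2 \<psi>2"
    and fg: "\<And>j. j \<in> J \<Longrightarrow> fs j = map_edge \<phi> (gs j)"
    and gsub: "mset_family J gs \<subseteq># mset (gE G) - mset_family I es"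
  shows "is_repl X G (Inl ` I \<union> Inr ` J) (case_sum es gs) (case_sum Hs Ks) (\<phi>2 \<circ> \<phi>)
           (case_sum (\<lambda>i. \<phi>2 \<circ> \<psi> i) \<psi>2)"
proof (rule is_replI)
  note c = is_repl_comp_inj[OF d1 is_repl_inj_outer[OF d2]]
  have fI: "finite I" and fJ: "finite J" by (rule is_repl_finite[OF d1], rule is_repl_finite[OF d2])
  have GY: "\<phi> ` gV G \<subseteq> gV Y" and HY: "\<And>i. i \<in> I \<Longrightarrow> \<psi> i ` inner_nodes (Hs i) \<subseteq> gV Y"
    unfolding is_repl_nodes[OF d1] using inner_nodes_subset by blast+
  have KY: "\<And>j. j \<in> J \<Longrightarrow> \<psi>2 j ` inner_nodes (Ks j) \<inter> \<phi>2 ` gV Y = {}"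
    by (rule is_repl_disjoint_outer[OF d2])
  have es: "mset_family (Inl ` I \<union> Inr ` J) (case_sum es gs) = mset_family I es + mset_family J gs"
    unfolding mset_family_def by (simp add: sum_Inl_Inr[OF fI fJ])
  show "finite (Inl ` I \<union> Inr ` J)" using fI fJ by simp
  show "mset_family (Inl ` I \<union> Inr ` J) (case_sum es gs) \<subseteq># mset (gE G)"
    unfolding es using gsub is_repl_subset[OF d1] by (metis subset_mset.le_diff_conv2 add.commute)
  show "hg_struct G" by (rule is_repl_struct_base[OF d1])
  show "inj_on (\<phi>2 \<circ> \<phi>) (gV G)" by (rule c(1))
  show "gV X = (\<phi>2 \<circ> \<phi>) ` gV G \<union> (\<Union>x\<in>Inl ` I \<union> Inr ` J. case_sum (\<lambda>i. \<phi>2 \<circ> \<psi> i) \<psi>2 x ` gV (case_sum Hs Ks x))"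
    unfolding is_repl_nodes[OF d2] is_repl_nodes[OF d1] image_Un image_UN by (simp add: image_comp Un_assoc)
  show "gext X = map (\<phi>2 \<circ> \<phi>) (gext G)" using is_repl_gext[OF d1] is_repl_gext[OF d2] by simp
  have fs: "mset_family J fs = image_mset (map_edge \<phi>) (mset_family J gs)" by (rule mset_family_map_edge[OF fg])
  have "mset (gE X) = image_mset (map_edge \<phi>2) (mset (gE Y) - mset_family J fs)
      + (\<Sum>j\<in>J. image_mset (map_edge (\<psi>2 j)) (mset (gE (Ks j))))" by (rule is_repl_edges[OF d2])
  also have "mset (gE Y) - mset_family J fs = image_mset (map_edge \<phi>) (mset (gE G) - mset_family I es - mset_family J gs)
      + (\<Sum>i\<in>I. image_mset (map_edge (\<psi> i)) (mset (gE (Hs i))))"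
    unfolding is_repl_edges[OF d1] fs by (rule image_mset_add_diff[OF gsub])
  finally show "mset (gE X) = image_mset (map_edge (\<phi>2 \<circ> \<phi>)) (mset (gE G) - mset_family (Inl ` I \<union> Inr ` J) (case_sum es gs))
      + (\<Sum>x\<in>Inl ` I \<union> Inr ` J. image_mset (map_edge (case_sum (\<lambda>i. \<phi>2 \<circ> \<psi> i) \<psi>2 x)) (mset (gE (case_sum Hs Ks x))))"
    unfolding es sum_Inl_Inr[OF fI fJ] by (simp add: image_mset_sum image_mset_map_edge_comp diff_diff_add add.assoc)
  fix x y assume x: "x \<in> Inl ` I \<union> Inr ` J"
  show "hg_struct (case_sum Hs Ks x)" using x is_repl_struct_part[OF d1] is_repl_struct_part[OF d2] by auto
  show "inj_on (case_sum (\<lambda>i. \<phi>2 \<circ> \<psi> i) \<psi>2 x) (gV (case_sum Hs Ks x))"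
    using x c(2) is_repl_inj_inner[OF d2] by auto
  show "map (case_sum (\<lambda>i. \<phi>2 \<circ> \<psi> i) \<psi>2 x) (gext (case_sum Hs Ks x)) = map (\<phi>2 \<circ> \<phi>) (fst (case_sum es gs x))"
    using x c(3) is_repl_attach[OF d2] fg by auto
  have KG: "\<psi>2 j ` inner_nodes (Ks j) \<inter> (\<phi>2 \<circ> \<phi>) ` gV G = {}" if "j \<in> J" for j
    using KY[OF that] GY by (simp add: image_comp) blast
  show "case_sum (\<lambda>i. \<phi>2 \<circ> \<psi> i) \<psi>2 x ` inner_nodes (case_sum Hs Ks x) \<inter> (\<phi>2 \<circ> \<phi>) ` gV G = {}"
    using x by (elim UnE imageE) (simp_all only: sum.case c(4) KG)
  assume y: "y \<in> Inl ` I \<union> Inr ` J" and xy: "x \<noteq> y"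
  have cross: "(\<phi>2 \<circ> \<psi> i) ` inner_nodes (Hs i) \<inter> \<psi>2 j ` inner_nodes (Ks j) = {}" if "i \<in> I" "j \<in> J" for i j
    using KY[OF that(2)] HY[OF that(1)] by (simp add: image_comp) blast
  then have cross': "\<psi>2 j ` inner_nodes (Ks j) \<inter> (\<phi>2 \<circ> \<psi> i) ` inner_nodes (Hs i) = {}" if "i \<in> I" "j \<in> J" for i j
    using that by (simp add: Int_commute)
  from x y xy show "case_sum (\<lambda>i. \<phi>2 \<circ> \<psi> i) \<psi>2 x ` inner_nodes (case_sum Hs Ks x)
      \<inter> case_sum (\<lambda>i. \<phi>2 \<circ> \<psi> i) \<psi>2 y ` inner_nodes (case_sum Hs Ks y) = {}"
    by (elim UnE imageE)
       (simp_all only: sum.case sum.inject c(5) is_repl_disjoint_inner[OF d2] cross cross' simp_thms)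
qed

lemma is_repl_nested_embedding:
  assumes d1: "is_repl Y G I es Hs \<phi> \<psi>" and d2: "is_repl X Y J fs Ks \<phi>2 \<psi>2" and k: "k \<in> I"
    and fg: "\<And>j. j \<in> J \<Longrightarrow> fs j = map_edge (\<psi> k) (gs j)"
    and d3: "is_repl Z (Hs k) J gs Ks \<phi>3 \<psi>3"
  obtains \<chi> where "inj_on \<chi> (gV Z)"
    "\<chi> ` gV Z = (\<phi>2 \<circ> \<psi> k) ` gV (Hs k) \<union> (\<Union>j\<in>J. \<psi>2 j ` gV (Ks j))"
    "\<chi> ` inner_nodes Z \<subseteq> (\<phi>2 \<circ> \<psi> k) ` inner_nodes (Hs k) \<union> (\<Union>j\<in>J. \<psi>2 j ` inner_nodes (Ks j))"
    "image_mset (map_edge \<chi>) (mset (gE Z)) = image_mset (map_edge (\<phi>2 \<circ> \<psi> k)) (mset (gE (Hs k)) - mset_family J gs)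
       + (\<Sum>j\<in>J. image_mset (map_edge (\<psi>2 j)) (mset (gE (Ks j))))"
    "map \<chi> (gext Z) = map (\<phi>2 \<circ> \<psi> k) (gext (Hs k))"
proof
  let ?\<alpha> = "\<phi>2 \<circ> \<psi> k" and ?\<chi> = "glue_map (Hs k) J Ks \<phi>3 \<psi>3 (\<phi>2 \<circ> \<psi> k) \<psi>2"
  have compat: "map (\<psi>2 j) (gext (Ks j)) = map ?\<alpha> (fst (gs j))" if "j \<in> J" for j
    unfolding is_repl_attach[OF d2 that] fg[OF that] by simp
  have disj: "\<psi>2 j ` inner_nodes (Ks j) \<inter> ?\<alpha> ` gV (Hs k) = {}" if "j \<in> J" for j
    using is_repl_disjoint_outer[OF d2 that] is_repl_inner_subset[OF d1 k] by (auto simp: image_comp)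
  show "inj_on ?\<chi> (gV Z)"
    by (rule inj_on_glue_map[OF d3 compat is_repl_comp_inj(2)[OF d1 is_repl_inj_outer[OF d2] k]
          is_repl_inj_inner[OF d2] disj is_repl_disjoint_inner[OF d2]])
  show "?\<chi> ` gV Z = ?\<alpha> ` gV (Hs k) \<union> (\<Union>j\<in>J. \<psi>2 j ` gV (Ks j))" by (rule glue_map_image[OF d3 compat])
  show "?\<chi> ` inner_nodes Z \<subseteq> ?\<alpha> ` inner_nodes (Hs k) \<union> (\<Union>j\<in>J. \<psi>2 j ` inner_nodes (Ks j))"
    by (rule glue_map_inner_nodes[OF d3])
  show "image_mset (map_edge ?\<chi>) (mset (gE Z)) = image_mset (map_edge ?\<alpha>) (mset (gE (Hs k)) - mset_family J gs)
      + (\<Sum>j\<in>J. image_mset (map_edge (\<psi>2 j)) (mset (gE (Ks j))))"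
    by (rule glue_map_edges[OF d3 compat])
  show "map ?\<chi> (gext Z) = map ?\<alpha> (gext (Hs k))"
    unfolding is_repl_gext[OF d3] using glue_map_outer[OF d3] is_repl_struct_base[OF d3]
    by (auto simp: hg_struct_def)
qed

lemma is_repl_edges_nested:
  assumes d1: "is_repl Y G I es Hs \<phi> \<psi>" and d2: "is_repl X Y J fs Ks \<phi>2 \<psi>2" and k: "k \<in> I"
    and fg: "\<And>j. j \<in> J \<Longrightarrow> fs j = map_edge (\<psi> k) (gs j)"
    and d3: "is_repl Z (Hs k) J gs Ks \<phi>3 \<psi>3"
    and \<chi>: "image_mset (map_edge \<chi>) (mset (gE Z)) = image_mset (map_edge (\<phi>2 \<circ> \<psi> k)) (mset (gE (Hs k)) - mset_family J gs)
       + (\<Sum>j\<in>J. image_mset (map_edge (\<psi>2 j)) (mset (gE (Ks j))))"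
    and \<psi>': "\<And>i. \<psi>' i = (if i = k then \<chi> else \<phi>2 \<circ> \<psi> i)"
  shows "mset (gE X) = image_mset (map_edge (\<phi>2 \<circ> \<phi>)) (mset (gE G) - mset_family I es)
    + (\<Sum>i\<in>I. image_mset (map_edge (\<psi>' i)) (mset (gE ((Hs(k := Z)) i))))"
proof -
  define R where "R = mset (gE G) - mset_family I es"
  define S where "S = (\<Sum>i\<in>I - {k}. image_mset (map_edge (\<psi> i)) (mset (gE (Hs i))))"
  have fI: "finite I" by (rule is_repl_finite[OF d1])
  have fs: "mset_family J fs = image_mset (map_edge (\<psi> k)) (mset_family J gs)"
    by (rule mset_family_map_edge[OF fg])
  have "mset (gE Y) = image_mset (map_edge (\<psi> k)) (mset (gE (Hs k))) + (image_mset (map_edge \<phi>) R + S)"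
    unfolding is_repl_edges[OF d1] R_def S_def sum.remove[OF fI k] by (simp add: add_ac)
  then have "mset (gE Y) - mset_family J fs
      = image_mset (map_edge (\<psi> k)) (mset (gE (Hs k)) - mset_family J gs) + (image_mset (map_edge \<phi>) R + S)"
    unfolding fs using image_mset_add_diff[OF is_repl_subset[OF d3]] by simp
  then have "mset (gE X) = image_mset (map_edge (\<phi>2 \<circ> \<psi> k)) (mset (gE (Hs k)) - mset_family J gs)
      + image_mset (map_edge (\<phi>2 \<circ> \<phi>)) R + (\<Sum>i\<in>I - {k}. image_mset (map_edge (\<phi>2 \<circ> \<psi> i)) (mset (gE (Hs i))))
      + (\<Sum>j\<in>J. image_mset (map_edge (\<psi>2 j)) (mset (gE (Ks j))))"
    unfolding is_repl_edges[OF d2] S_def by (simp add: image_mset_sum image_mset_map_edge_comp add_ac)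
  also have "(\<Sum>i\<in>I - {k}. image_mset (map_edge (\<phi>2 \<circ> \<psi> i)) (mset (gE (Hs i))))
      = (\<Sum>i\<in>I - {k}. image_mset (map_edge (\<psi>' i)) (mset (gE ((Hs(k := Z)) i))))"
    by (rule sum.cong) (simp_all add: \<psi>')
  finally show ?thesis
    unfolding sum.remove[OF fI k] R_def using \<chi> by (simp add: \<psi>' add_ac comp_def)
qed

lemma is_repl_compose_nested:
  assumes d1: "is_repl Y G I es Hs \<phi> \<psi>" and d2: "is_repl X Y J fs Ks \<phi>2 \<psi>2" and k: "k \<in> I"
    and fg: "\<And>j. j \<in> J \<Longrightarrow> fs j = map_edge (\<psi> k) (gs j)"
    and d3: "is_repl Z (Hs k) J gs Ks \<phi>3 \<psi>3"
  shows "\<exists>\<psi>'. is_repl X G I es (Hs(k := Z)) (\<phi>2 \<circ> \<phi>) \<psi>'"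
proof -
  obtain \<chi> where \<chi>: "inj_on \<chi> (gV Z)"
    "\<chi> ` gV Z = (\<phi>2 \<circ> \<psi> k) ` gV (Hs k) \<union> (\<Union>j\<in>J. \<psi>2 j ` gV (Ks j))"
    "\<chi> ` inner_nodes Z \<subseteq> (\<phi>2 \<circ> \<psi> k) ` inner_nodes (Hs k) \<union> (\<Union>j\<in>J. \<psi>2 j ` inner_nodes (Ks j))"
    "image_mset (map_edge \<chi>) (mset (gE Z)) = image_mset (map_edge (\<phi>2 \<circ> \<psi> k)) (mset (gE (Hs k)) - mset_family J gs)
       + (\<Sum>j\<in>J. image_mset (map_edge (\<psi>2 j)) (mset (gE (Ks j))))"
    "map \<chi> (gext Z) = map (\<phi>2 \<circ> \<psi> k) (gext (Hs k))"
    by (rule is_repl_nested_embedding[OF d1 d2 k fg d3])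
  note c = is_repl_comp_inj[OF d1 is_repl_inj_outer[OF d2]]
  have fI: "finite I" by (rule is_repl_finite[OF d1])
  have GY: "(\<phi>2 \<circ> \<phi>) ` gV G \<subseteq> \<phi>2 ` gV Y"
    using image_mono[OF is_repl_outer_subset[OF d1], of \<phi>2] by (simp add: image_comp)
  have HY: "(\<phi>2 \<circ> \<psi> i) ` inner_nodes (Hs i) \<subseteq> \<phi>2 ` gV Y" if "i \<in> I" for i
    using is_repl_inner_subset[OF d1 that] inner_nodes_subset[of "Hs i"] by (simp add: image_comp[symmetric]) blast
  have KY: "\<psi>2 j ` inner_nodes (Ks j) \<inter> \<phi>2 ` gV Y = {}" if "j \<in> J" for j
    by (rule is_repl_disjoint_outer[OF d2 that])
  have \<chi>_outer: "\<chi> ` inner_nodes Z \<inter> (\<phi>2 \<circ> \<phi>) ` gV G = {}"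
    by (rule disjoint_by_cover[OF c(4)[OF k] _ \<chi>(3)]) (use KY GY in blast)
  have \<chi>_inner: "\<chi> ` inner_nodes Z \<inter> (\<phi>2 \<circ> \<psi> i) ` inner_nodes (Hs i) = {}" if "i \<in> I" "i \<noteq> k" for i
    by (rule disjoint_by_cover[OF c(5)[OF k that(1)] _ \<chi>(3)]) (use KY HY[OF that(1)] that(2) in blast)+
  define \<psi>' where "\<psi>' = (\<lambda>i. \<phi>2 \<circ> \<psi> i)(k := \<chi>)"
  have "is_repl X G I es (Hs(k := Z)) (\<phi>2 \<circ> \<phi>) \<psi>'"
  proof (rule is_replI)
    have "\<psi>' i ` gV ((Hs(k := Z)) i) = (if i = k then (\<phi>2 \<circ> \<psi> k) ` gV (Hs k) \<union> (\<Union>j\<in>J. \<psi>2 j ` gV (Ks j))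
        else (\<phi>2 \<circ> \<psi> i) ` gV (Hs i))" for i
      by (simp add: \<psi>'_def \<chi>(2))
    then have U: "(\<Union>i\<in>I. \<psi>' i ` gV ((Hs(k := Z)) i))
        = (\<Union>i\<in>I. (\<phi>2 \<circ> \<psi> i) ` gV (Hs i)) \<union> (\<Union>j\<in>J. \<psi>2 j ` gV (Ks j))"
      using k by (auto split: if_splits)
    show "gV X = (\<phi>2 \<circ> \<phi>) ` gV G \<union> (\<Union>i\<in>I. \<psi>' i ` gV ((Hs(k := Z)) i))"
      unfolding is_repl_nodes[OF d2] is_repl_nodes[OF d1] U image_Un image_UN image_comp by blast
    show "mset (gE X) = image_mset (map_edge (\<phi>2 \<circ> \<phi>)) (mset (gE G) - mset_family I es)
        + (\<Sum>i\<in>I. image_mset (map_edge (\<psi>' i)) (mset (gE ((Hs(k := Z)) i))))"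
      by (rule is_repl_edges_nested[OF d1 d2 k fg d3 \<chi>(4)]) (simp_all add: \<psi>'_def)
    show "gext X = map (\<phi>2 \<circ> \<phi>) (gext G)" using is_repl_gext[OF d1] is_repl_gext[OF d2] by simp
    fix i assume i: "i \<in> I"
    show "hg_struct ((Hs(k := Z)) i)" using i is_repl_hg_struct[OF d3] is_repl_struct_part[OF d1] by auto
    show "inj_on (\<psi>' i) (gV ((Hs(k := Z)) i))" using i \<chi>(1) c(2) by (auto simp: \<psi>'_def)
    show "map (\<psi>' i) (gext ((Hs(k := Z)) i)) = map (\<phi>2 \<circ> \<phi>) (fst (es i))"
      using i \<chi>(5) c(3) k by (auto simp: \<psi>'_def)
    show "\<psi>' i ` inner_nodes ((Hs(k := Z)) i) \<inter> (\<phi>2 \<circ> \<phi>) ` gV G = {}"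
      using i \<chi>_outer c(4) by (auto simp: \<psi>'_def)
    fix i' assume "i' \<in> I" "i \<noteq> i'"
    then show "\<psi>' i ` inner_nodes ((Hs(k := Z)) i) \<inter> \<psi>' i' ` inner_nodes ((Hs(k := Z)) i') = {}"
      using i \<chi>_inner c(5) by (auto simp: \<psi>'_def Int_commute)
  qed (use d1 in \<open>simp_all add: is_repl_finite is_repl_subset is_repl_struct_base c(1)\<close>)
  then show ?thesis by blast
qed

lemma repl1_nested_hg_iso:
  assumes d1: "is_repl Y G I es Hs \<phi> \<psi>" and k: "k \<in> I"
    and e0: "gE Y ! e0 = map_edge (\<psi> k) (gE (Hs k) ! e1)"
    and d2: "is_repl X Y {e0} (\<lambda>i. gE Y ! i) (\<lambda>_. M) \<phi>2 \<psi>2"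
    and d3: "is_repl W (Hs k) {e1} (\<lambda>i. gE (Hs k) ! i) (\<lambda>_. M) \<phi>3 \<psi>3"
    and d': "is_repl X' G I es Hs' \<phi>' \<psi>'" and hs': "\<And>i. i \<in> I \<Longrightarrow> i \<noteq> k \<Longrightarrow> Hs' i = Hs i"
    and iso: "hg_iso W (Hs' k)"
  shows "hg_iso X X'"
proof -
  obtain \<psi>'' where dd: "is_repl X G I es (Hs(k := W)) (\<phi>2 \<circ> \<phi>) \<psi>''"
    using is_repl_compose_nested[OF d1 d2 k _ is_repl_singleton_reindex[OF d3]] e0 by auto
  obtain f where f: "hg_iso_by W (Hs' k) f" using iso unfolding hg_iso_iff by blast
  show ?thesis
  proof (rule is_repl_hg_iso[OF dd d' hg_iso_by_refl, where f = "\<lambda>i. if i = k then f else id"])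
    show "hg_iso_by ((Hs(k := W)) i) (Hs' i) (if i = k then f else id)" if "i \<in> I" for i
      using f hs'[OF that] hg_iso_by_refl by auto
  qed simp
qed

lemma repl1_swap_hg_iso:
  assumes d1: "is_repl Y G {e} (\<lambda>i. gE G ! i) (\<lambda>_. F) \<phi> \<psi>"
    and d1': "is_repl Y' G {e0} (\<lambda>i. gE G ! i) (\<lambda>_. M) \<phi>' \<psi>'"
    and ee: "e < length (gE G)" "e0 < length (gE G)" "e \<noteq> e0"
    and y: "gE Y ! e0' = map_edge \<phi> (gE G ! e0)" and y': "gE Y' ! e' = map_edge \<phi>' (gE G ! e)"
    and d2: "is_repl X Y {e0'} (\<lambda>i. gE Y ! i) (\<lambda>_. M) \<phi>2 \<psi>2"
    and d2': "is_repl X' Y' {e'} (\<lambda>i. gE Y' ! i) (\<lambda>_. F) \<phi>2' \<psi>2'"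
  shows "hg_iso X X'"
proof -
  have s1: "mset_family {e0'} (\<lambda>_. gE G ! e0) \<subseteq># mset (gE G) - mset_family {e} (\<lambda>i. gE G ! i)"
    using nth_mem_diff_nth[OF ee(2,1)] ee(3) by simp
  have s2: "mset_family {e'} (\<lambda>_. gE G ! e) \<subseteq># mset (gE G) - mset_family {e0} (\<lambda>i. gE G ! i)"
    using nth_mem_diff_nth[OF ee(1,2)] ee(3) by simp
  have c1: "is_repl X G (Inl ` {e} \<union> Inr ` {e0'}) (case_sum (\<lambda>i. gE G ! i) (\<lambda>_. gE G ! e0))
      (case_sum (\<lambda>_. F) (\<lambda>_. M)) (\<phi>2 \<circ> \<phi>) (case_sum (\<lambda>i. \<phi>2 \<circ> \<psi> i) \<psi>2)"
    by (rule is_repl_compose_disjoint[OF d1 d2 _ s1]) (use y in simp)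
  have c2: "is_repl X' G (Inl ` {e0} \<union> Inr ` {e'}) (case_sum (\<lambda>i. gE G ! i) (\<lambda>_. gE G ! e))
      (case_sum (\<lambda>_. M) (\<lambda>_. F)) (\<phi>2' \<circ> \<phi>') (case_sum (\<lambda>i. \<phi>2' \<circ> \<psi>' i) \<psi>2')"
    by (rule is_repl_compose_disjoint[OF d1' d2' _ s2]) (use y' in simp)
  define \<sigma> :: "nat + nat \<Rightarrow> nat + nat" where "\<sigma> = (\<lambda>x. case x of Inl _ \<Rightarrow> Inr e' | Inr _ \<Rightarrow> Inl e0)"
  have b: "bij_betw \<sigma> (Inl ` {e} \<union> Inr ` {e0'}) (Inl ` {e0} \<union> Inr ` {e'})"
    unfolding bij_betw_def inj_on_def \<sigma>_def by auto
  have c2': "is_repl X' G (Inl ` {e} \<union> Inr ` {e0'}) (case_sum (\<lambda>i. gE G ! i) (\<lambda>_. gE G ! e) \<circ> \<sigma>)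
      (case_sum (\<lambda>_. M) (\<lambda>_. F) \<circ> \<sigma>) (\<phi>2' \<circ> \<phi>') (case_sum (\<lambda>i. \<phi>2' \<circ> \<psi>' i) \<psi>2' \<circ> \<sigma>)"
    by (rule is_repl_reindex[OF c2 b])
  show ?thesis
  proof (rule is_repl_hg_iso[OF c1 c2' hg_iso_by_refl, where f = "\<lambda>_. id"])
    show "(case_sum (\<lambda>i. gE G ! i) (\<lambda>_. gE G ! e) \<circ> \<sigma>) i = map_edge id (case_sum (\<lambda>i. gE G ! i) (\<lambda>_. gE G ! e0) i)"
      if "i \<in> Inl ` {e} \<union> Inr ` {e0'}" for i using that by (auto simp: \<sigma>_def)
    show "hg_iso_by (case_sum (\<lambda>_. F) (\<lambda>_. M) i) ((case_sum (\<lambda>_. M) (\<lambda>_. F) \<circ> \<sigma>) i) id"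
      if "i \<in> Inl ` {e} \<union> Inr ` {e0'}" for i using that by (auto simp: \<sigma>_def hg_iso_by_refl)
  qed
qed

section \<open>The replacement operation\<close>

lemma g_node_inj: "inj g_node"
  by (auto simp: g_node_def inj_def)

lemma h_node_ext:
  assumes "length (gext H) = length a" "distinct (gext H)" "j < length a"
  shows "h_node i H a (gext H ! j) = g_node (a ! j)"
  using assms by (simp add: h_node_def map_of_zip_nth)

lemma h_node_int:
  assumes "length (gext H) = length a" "w \<notin> set (gext H)"
  shows "h_node i H a w = prod_encode (Suc i, w)"
proof -
  have "map_of (zip (gext H) a) w = None" using assms by simp
  then show ?thesis by (simp add: h_node_def)
qed

lemma h_node_map_ext:
  assumes "length (gext H) = length a" "distinct (gext H)"
  shows "map (h_node i H a) (gext H) = map g_node a"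
  by (rule nth_equalityI) (use assms h_node_ext in auto)

lemma h_node_image:
  assumes "length (gext H) = length a" "distinct (gext H)" "set (gext H) \<subseteq> gV H"
  shows "h_node i H a ` gV H = (\<lambda>w. prod_encode (Suc i, w)) ` (gV H - set (gext H)) \<union> g_node ` set a"
proof
  show "h_node i H a ` gV H \<subseteq> (\<lambda>w. prod_encode (Suc i, w)) ` (gV H - set (gext H)) \<union> g_node ` set a"
  proof
    fix x assume "x \<in> h_node i H a ` gV H"
    then obtain w where w: "w \<in> gV H" "x = h_node i H a w" by blast
    show "x \<in> (\<lambda>w. prod_encode (Suc i, w)) ` (gV H - set (gext H)) \<union> g_node ` set a"
    proof (cases "w \<in> set (gext H)")
      case True
      then obtain j where "j < length (gext H)" "w = gext H ! j" by (metis in_set_conv_nth)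
      then show ?thesis using w assms h_node_ext[of H a j i] by auto
    next
      case False
      then show ?thesis using w assms h_node_int[of H a w i] by auto
    qed
  qed
next
  show "(\<lambda>w. prod_encode (Suc i, w)) ` (gV H - set (gext H)) \<union> g_node ` set a \<subseteq> h_node i H a ` gV H"
  proof
    fix x assume "x \<in> (\<lambda>w. prod_encode (Suc i, w)) ` (gV H - set (gext H)) \<union> g_node ` set a"
    then show "x \<in> h_node i H a ` gV H"
    proof
      assume "x \<in> (\<lambda>w. prod_encode (Suc i, w)) ` (gV H - set (gext H))"
      then obtain w where "w \<in> gV H" "w \<notin> set (gext H)" "x = prod_encode (Suc i, w)" by blast
      then show ?thesis using assms h_node_int[of H a w i] by (metis image_eqI)
    next
      assume "x \<in> g_node ` set a"
      then obtain j where j: "j < length a" "x = g_node (a ! j)" by (metis imageE in_set_conv_nth)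
      then have "x = h_node i H a (gext H ! j)" using assms h_node_ext by metis
      moreover have "gext H ! j \<in> gV H" using assms j by auto
      ultimately show ?thesis by blast
    qed
  qed
qed

lemma h_node_inj:
  assumes "length (gext H) = length a" "distinct (gext H)" "distinct a"
  shows "inj_on (h_node i H a) (gV H)"
proof
  fix x y assume xy: "x \<in> gV H" "y \<in> gV H" "h_node i H a x = h_node i H a y"
  show "x = y"
  proof (cases "x \<in> set (gext H)"; cases "y \<in> set (gext H)")
    assume "x \<in> set (gext H)" "y \<in> set (gext H)"
    then obtain j k where "j < length a" "x = gext H ! j" "k < length a" "y = gext H ! k"
      using assms(1) by (metis in_set_conv_nth)
    then show ?thesis using xy assms h_node_ext[of H a _ i] g_node_inj
      by (metis inj_eq nth_eq_iff_index_eq)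
  next
    assume "x \<in> set (gext H)" "y \<notin> set (gext H)"
    then obtain j where "j < length a" "x = gext H ! j" using assms(1) by (metis in_set_conv_nth)
    then show ?thesis using xy assms h_node_ext[of H a _ i] h_node_int[of H a y i] \<open>y \<notin> _\<close>
      by (simp add: g_node_def)
  next
    assume "x \<notin> set (gext H)" "y \<in> set (gext H)"
    then obtain j where "j < length a" "y = gext H ! j" using assms(1) by (metis in_set_conv_nth)
    then show ?thesis using xy assms h_node_ext[of H a _ i] h_node_int[of H a x i] \<open>x \<notin> _\<close>
      by (simp add: g_node_def)
  next
    assume "x \<notin> set (gext H)" "y \<notin> set (gext H)"
    then show ?thesis using xy assms h_node_int[of H a x i] h_node_int[of H a y i] by simp
  qed
qed

lemma h_node_inner_nodes:
  assumes "length (gext H) = length a"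
  shows "h_node i H a ` inner_nodes H = (\<lambda>w. prod_encode (Suc i, w)) ` inner_nodes H"
  using assms h_node_int unfolding inner_nodes_def by (metis (no_types, lifting) DiffD2 image_cong)

lemma mset_gE_repl:
  "mset (gE (repl G r)) = (\<Sum>i<length (gE G). case r i of
       None \<Rightarrow> {#map_edge g_node (gE G ! i)#}
     | Some H \<Rightarrow> image_mset (map_edge (h_node i H (fst (gE G ! i)))) (mset (gE H)))"
proof -
  define F where "F = (\<lambda>(i, (a, l)). case r i of
                None \<Rightarrow> [(map g_node a, l)]
              | Some H \<Rightarrow> map (\<lambda>(b, l'). (map (h_node i H a) b, l')) (gE H))"
  have "gE (repl G r) = concat (map F (enumerate 0 (gE G)))"
    unfolding repl_def F_def by simp
  then have "mset (gE (repl G r)) = sum_list (map (\<lambda>i. mset (F (i, gE G ! i))) [0..<length (gE G)])"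
    by (simp add: mset_concat enumerate0 comp_def)
  also have "\<dots> = (\<Sum>i<length (gE G). mset (F (i, gE G ! i)))" by (rule sum_list_map_upt)
  also have "\<dots> = (\<Sum>i<length (gE G). case r i of
       None \<Rightarrow> {#map_edge g_node (gE G ! i)#}
     | Some H \<Rightarrow> image_mset (map_edge (h_node i H (fst (gE G ! i)))) (mset (gE H)))"
  proof (rule sum.cong[OF refl])
    fix i
    obtain a l where al: "gE G ! i = (a, l)" by (cases "gE G ! i")
    have e: "(\<lambda>(b, l'). (map h b, l')) = map_edge h" for h :: "nat \<Rightarrow> nat"
      by (auto simp: map_edge_def fun_eq_iff)
    show "mset (F (i, gE G ! i)) = (case r i of
       None \<Rightarrow> {#map_edge g_node (gE G ! i)#}
     | Some H \<Rightarrow> image_mset (map_edge (h_node i H (fst (gE G ! i)))) (mset (gE H)))"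
      unfolding al F_def by (cases "r i") (simp_all add: e)
  qed
  finally show ?thesis .
qed

lemma gV_repl_on:
  assumes I: "I \<subseteq> {..<length (gE G)}"
    and r: "\<And>i. i < length (gE G) \<Longrightarrow> r i = (if i \<in> I then Some (Hs i) else None)"
  shows "gV (repl G r) = g_node ` gV G \<union> (\<Union>i\<in>I. (\<lambda>w. prod_encode (Suc i, w)) ` inner_nodes (Hs i))"
proof -
  have "(\<Union>i\<in>{i. i < length (gE G)}. case r i of None \<Rightarrow> {}
      | Some H \<Rightarrow> (\<lambda>w. prod_encode (Suc i, w)) ` (gV H - set (gext H)))
      = (\<Union>i\<in>I. (\<lambda>w. prod_encode (Suc i, w)) ` inner_nodes (Hs i))"
    using I by (auto simp: r inner_nodes_def split: if_splits)
  then show ?thesis by (simp add: repl_def)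
qed

lemma mset_gE_repl_on:
  assumes I: "I \<subseteq> {..<length (gE G)}"
    and r: "\<And>i. i < length (gE G) \<Longrightarrow> r i = (if i \<in> I then Some (Hs i) else None)"
  shows "mset (gE (repl G r)) = image_mset (map_edge g_node) (mset (gE G) - mset_family I (\<lambda>i. gE G ! i))
    + (\<Sum>i\<in>I. image_mset (map_edge (h_node i (Hs i) (fst (gE G ! i)))) (mset (gE (Hs i))))"
proof -
  let ?n = "length (gE G)"
  have "mset (gE G) - mset_family I (\<lambda>i. gE G ! i) = mset_family ({..<?n} - I) (\<lambda>i. gE G ! i)"
    using mset_family_split[OF finite_lessThan I, of "\<lambda>i. gE G ! i"] mset_eq_mset_family_nth[of "gE G"] by simp
  moreover have "mset (gE (repl G r)) = (\<Sum>i\<in>{..<?n} - I. {#map_edge g_node (gE G ! i)#})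
      + (\<Sum>i\<in>I. image_mset (map_edge (h_node i (Hs i) (fst (gE G ! i)))) (mset (gE (Hs i))))"
    unfolding mset_gE_repl sum.subset_diff[OF I finite_lessThan]
    by (intro arg_cong2[where f = "(+)"] sum.cong) (use I in \<open>auto simp: r\<close>)
  ultimately show ?thesis by (simp add: mset_family_def image_mset_sum)
qed

lemma is_repl_repl_on:
  assumes sG: "hg_struct G" and I: "I \<subseteq> {..<length (gE G)}"
    and r: "\<And>i. i < length (gE G) \<Longrightarrow> r i = (if i \<in> I then Some (Hs i) else None)"
    and sH: "\<And>i. i \<in> I \<Longrightarrow> hg_struct (Hs i) \<and> length (fst (gE G ! i)) = length (gext (Hs i))"
  shows "is_repl (repl G r) G I (\<lambda>i. gE G ! i) Hs g_node (\<lambda>i. h_node i (Hs i) (fst (gE G ! i)))"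
proof (rule is_replI)
  let ?\<psi> = "\<lambda>i. h_node i (Hs i) (fst (gE G ! i))" and ?new = "\<lambda>i. (\<lambda>w. prod_encode (Suc i, w)) ` inner_nodes (Hs i)"
  have eG: "distinct (fst (gE G ! i)) \<and> set (fst (gE G ! i)) \<subseteq> gV G" if "i \<in> I" for i
    using hg_struct_edge[OF sG nth_mem[of i]] I that by auto
  have ext: "distinct (gext (Hs i)) \<and> set (gext (Hs i)) \<subseteq> gV (Hs i)" if "i \<in> I" for i
    using sH[OF that] unfolding hg_struct_def by blast
  have img: "?\<psi> i ` gV (Hs i) = ?new i \<union> g_node ` set (fst (gE G ! i))" if "i \<in> I" for i
    unfolding inner_nodes_def by (rule h_node_image) (use sH[OF that] ext[OF that] in auto)
  have imgi: "?\<psi> i ` inner_nodes (Hs i) = ?new i" if "i \<in> I" for i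
    by (rule h_node_inner_nodes) (use sH[OF that] in auto)
  show "finite I" by (rule finite_subset[OF I]) simp
  show "mset_family I (\<lambda>i. gE G ! i) \<subseteq># mset (gE G)"
    using mset_family_split[OF finite_lessThan I, of "\<lambda>i. gE G ! i"] mset_eq_mset_family_nth[of "gE G"] by simp
  show "hg_struct G" by (rule sG)
  show "inj_on g_node (gV G)" by (rule inj_on_subset[OF g_node_inj subset_UNIV])
  have V: "gV (repl G r) = g_node ` gV G \<union> (\<Union>i\<in>I. ?new i)" by (rule gV_repl_on[OF I r])
  have U: "(\<Union>i\<in>I. ?\<psi> i ` gV (Hs i)) = (\<Union>i\<in>I. ?new i) \<union> (\<Union>i\<in>I. g_node ` set (fst (gE G ! i)))"
    using img by auto
  have E: "(\<Union>i\<in>I. g_node ` set (fst (gE G ! i))) \<subseteq> g_node ` gV G"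
    using eG by (intro UN_least image_mono) blast
  show "gV (repl G r) = g_node ` gV G \<union> (\<Union>i\<in>I. ?\<psi> i ` gV (Hs i))"
    unfolding V U using E by blast
  show "mset (gE (repl G r)) = image_mset (map_edge g_node) (mset (gE G) - mset_family I (\<lambda>i. gE G ! i))
      + (\<Sum>i\<in>I. image_mset (map_edge (?\<psi> i)) (mset (gE (Hs i))))"
    by (rule mset_gE_repl_on[OF I r])
  show "gext (repl G r) = map g_node (gext G)" by (simp add: repl_def)
  fix i assume i: "i \<in> I"
  show "hg_struct (Hs i)" using sH[OF i] by blast
  show "inj_on (?\<psi> i) (gV (Hs i))" by (rule h_node_inj) (use sH[OF i] ext[OF i] eG[OF i] in auto)
  show "map (?\<psi> i) (gext (Hs i)) = map g_node (fst (gE G ! i))"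
    by (rule h_node_map_ext) (use sH[OF i] ext[OF i] in auto)
  show "?\<psi> i ` inner_nodes (Hs i) \<inter> g_node ` gV G = {}" unfolding imgi[OF i] by (auto simp: g_node_def)
  fix j assume "j \<in> I" "i \<noteq> j"
  then show "?\<psi> i ` inner_nodes (Hs i) \<inter> ?\<psi> j ` inner_nodes (Hs j) = {}"
    unfolding imgi[OF i] imgi[OF \<open>j \<in> I\<close>] by auto
qed

lemma is_repl_repl1:
  assumes "hg_struct G" "e < length (gE G)" "hg_struct H" "length (fst (gE G ! e)) = length (gext H)"
  shows "is_repl (repl1 G e H) G {e} (\<lambda>i. gE G ! i) (\<lambda>_. H) g_node (\<lambda>i. h_node i H (fst (gE G ! i)))"
  unfolding repl1_def by (rule is_repl_repl_on) (use assms in auto)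

lemma concat_map_upt_singleton:
  assumes "\<And>i. a \<le> i \<Longrightarrow> i < b \<Longrightarrow> F i = [f (xs ! i)]" "b \<le> length xs"
  shows "concat (map F [a..<b]) = map f (drop a (take b xs))"
proof -
  have "map F [a..<b] = map (\<lambda>i. [f (xs ! i)]) [a..<b]" by (rule map_cong[OF refl]) (simp add: assms(1))
  then have "concat (map F [a..<b]) = concat (map (\<lambda>i. [f (xs ! i)]) [a..<b])" by (rule arg_cong)
  also have "\<dots> = map (\<lambda>i. f (xs ! i)) [a..<b]" by (rule concat_map_singleton)
  also have "\<dots> = map f (drop a (take b xs))"
    by (rule nth_equalityI) (use assms(2) in \<open>auto simp: add.commute\<close>)
  finally show ?thesis .
qed

(* Edge positions matter here only because divL_graph refers to the edges inserted for D by index. *)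
lemma gE_repl1:
  assumes e: "e < length (gE G)"
  shows "gE (repl1 G e H) = map (map_edge g_node) (take e (gE G))
      @ map (map_edge (h_node e H (fst (gE G ! e)))) (gE H) @ map (map_edge g_node) (drop (Suc e) (gE G))"
proof -
  let ?n = "length (gE G)"
  define F where "F = (\<lambda>i. if i = e then map (map_edge (h_node e H (fst (gE G ! e)))) (gE H)
    else [map_edge g_node (gE G ! i)])"
  have "gE (repl1 G e H) = concat (map F [0..<?n])"
    unfolding repl1_def repl_def enumerate0
    by (auto simp: F_def map_edge_def case_prod_beta intro!: arg_cong[where f = concat])
  also have "[0..<?n] = [0..<e] @ e # [Suc e..<?n]"
    using upt_add_eq_append[of 0 e "?n - e"] upt_conv_Cons[of e ?n] e by simp
  finally show ?thesis
    using concat_map_upt_singleton[of 0 e F "map_edge g_node" "gE G"]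
      concat_map_upt_singleton[of "Suc e" ?n F "map_edge g_node" "gE G"] e
    by (simp add: F_def)
qed

lemma gE_repl1_nth:
  assumes "e < length (gE G)" "j < length (gE H)"
  shows "gE (repl1 G e H) ! (e + j) = map_edge (h_node e H (fst (gE G ! e))) (gE H ! j)"
  using assms unfolding gE_repl1[OF assms(1)] by (simp add: nth_append)

lemma length_gE_repl1:
  assumes "e < length (gE G)"
  shows "length (gE (repl1 G e H)) = length (gE G) - 1 + length (gE H)"
  using assms unfolding gE_repl1[OF assms(1)] by simp

lemma gext_repl_len[simp]: "length (gext (repl G r)) = length (gext G)"
  by (simp add: repl_def)

lemma gext_repl1_len[simp]: "length (gext (repl1 G e H)) = length (gext G)"
  by (simp add: repl1_def)

section \<open>Laws of single-edge replacement\<close>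

lemma repl1_hg_iso:
  assumes f: "hg_iso_by G G' f" and sG: "hg_struct G" "hg_struct G'"
    and e: "e < length (gE G)" "e' < length (gE G')" "gE G' ! e' = map_edge f (gE G ! e)"
    and sM: "hg_struct M" and lM: "length (fst (gE G ! e)) = length (gext M)"
  shows "hg_iso (repl1 G e M) (repl1 G' e' M)"
proof -
  have d: "is_repl (repl1 G e M) G {e} (\<lambda>i. gE G ! i) (\<lambda>_. M) g_node (\<lambda>i. h_node i M (fst (gE G ! i)))"
    by (rule is_repl_repl1[OF sG(1) e(1) sM lM])
  have "is_repl (repl1 G' e' M) G' {e'} (\<lambda>i. gE G' ! i) (\<lambda>_. M) g_node (\<lambda>i. h_node i M (fst (gE G' ! i)))"
    by (rule is_repl_repl1[OF sG(2) e(2) sM]) (use e(3) lM in simp)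
  from is_repl_singleton_reindex[OF this, of e] show ?thesis
    by (rule is_repl_hg_iso[OF d _ f, where f = "\<lambda>_. id"]) (simp_all add: e(3) hg_iso_by_refl)
qed

lemma repl1_hg_iso_part:
  assumes sG: "hg_struct G" and e: "e < length (gE G)" and sH: "hg_struct H" "hg_struct H'"
    and lH: "length (fst (gE G ! e)) = length (gext H)" and iso: "hg_iso H H'"
  shows "hg_iso (repl1 G e H) (repl1 G e H')"
proof -
  obtain f where f: "hg_iso_by H H' f" using iso unfolding hg_iso_iff by blast
  then have "length (gext H') = length (gext H)" unfolding hg_iso_by_def by simp
  with lH show ?thesis
    using is_repl_hg_iso[OF is_repl_repl1[OF sG e sH(1) lH] is_repl_repl1[OF sG e sH(2)] hg_iso_by_refl,
        where f = "\<lambda>_. f"] f by simp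
qed

lemma repl1_commute:
  assumes sG: "hg_struct G" and ee: "e < length (gE G)" "e0 < length (gE G)" "e \<noteq> e0"
    and sF: "hg_struct F" "length (fst (gE G ! e)) = length (gext F)"
    and sM: "hg_struct M" "length (fst (gE G ! e0)) = length (gext M)"
  obtains e0' e' where "e0' < length (gE (repl1 G e F))" "gE (repl1 G e F) ! e0' = map_edge g_node (gE G ! e0)"
    "e' < length (gE (repl1 G e0 M))" "gE (repl1 G e0 M) ! e' = map_edge g_node (gE G ! e)"
    "hg_iso (repl1 (repl1 G e F) e0' M) (repl1 (repl1 G e0 M) e' F)"
proof -
  have d1: "is_repl (repl1 G e F) G {e} (\<lambda>i. gE G ! i) (\<lambda>_. F) g_node (\<lambda>i. h_node i F (fst (gE G ! i)))"
    by (rule is_repl_repl1[OF sG ee(1) sF])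
  have d1': "is_repl (repl1 G e0 M) G {e0} (\<lambda>i. gE G ! i) (\<lambda>_. M) g_node (\<lambda>i. h_node i M (fst (gE G ! i)))"
    by (rule is_repl_repl1[OF sG ee(2) sM])
  obtain e0' where e0': "e0' < length (gE (repl1 G e F))" "gE (repl1 G e F) ! e0' = map_edge g_node (gE G ! e0)"
    using is_repl_edge_kept[OF d1] nth_mem_diff_nth[OF ee(2,1)] ee(3) by fastforce
  obtain e' where e': "e' < length (gE (repl1 G e0 M))" "gE (repl1 G e0 M) ! e' = map_edge g_node (gE G ! e)"
    using is_repl_edge_kept[OF d1'] nth_mem_diff_nth[OF ee(1,2)] ee(3) by fastforce
  have d2: "is_repl (repl1 (repl1 G e F) e0' M) (repl1 G e F) {e0'} (\<lambda>i. gE (repl1 G e F) ! i) (\<lambda>_. M) g_node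
      (\<lambda>i. h_node i M (fst (gE (repl1 G e F) ! i)))"
    by (rule is_repl_repl1[OF is_repl_hg_struct[OF d1] e0'(1) sM(1)]) (use e0'(2) sM(2) in simp)
  have d2': "is_repl (repl1 (repl1 G e0 M) e' F) (repl1 G e0 M) {e'} (\<lambda>i. gE (repl1 G e0 M) ! i) (\<lambda>_. F) g_node
      (\<lambda>i. h_node i F (fst (gE (repl1 G e0 M) ! i)))"
    by (rule is_repl_repl1[OF is_repl_hg_struct[OF d1'] e'(1) sF(1)]) (use e'(2) sF(2) in simp)
  have "hg_iso (repl1 (repl1 G e F) e0' M) (repl1 (repl1 G e0 M) e' F)"
    by (rule repl1_swap_hg_iso[OF d1 d1' ee e0'(2) e'(2) d2 d2'])
  with e0' e' show ?thesis using that by blast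
qed

lemma repl1_assoc:
  assumes sG: "hg_struct G" and e: "e < length (gE G)"
    and sH: "hg_struct H" "length (fst (gE G ! e)) = length (gext H)"
    and e1: "e1 < length (gE H)" and sM: "hg_struct M" "length (fst (gE H ! e1)) = length (gext M)"
  obtains e' where "e' < length (gE (repl1 G e H))"
    "gE (repl1 G e H) ! e' = map_edge (h_node e H (fst (gE G ! e))) (gE H ! e1)"
    "hg_iso (repl1 (repl1 G e H) e' M) (repl1 G e (repl1 H e1 M))"
proof -
  have d: "is_repl (repl1 G e H) G {e} (\<lambda>i. gE G ! i) (\<lambda>_. H) g_node (\<lambda>i. h_node i H (fst (gE G ! i)))"
    by (rule is_repl_repl1[OF sG e sH])
  obtain e' where e': "e' < length (gE (repl1 G e H))"
    "gE (repl1 G e H) ! e' = map_edge (h_node e H (fst (gE G ! e))) (gE H ! e1)"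
    using is_repl_edge_inserted[OF d _ nth_mem[OF e1]] by auto
  have d2: "is_repl (repl1 (repl1 G e H) e' M) (repl1 G e H) {e'} (\<lambda>i. gE (repl1 G e H) ! i) (\<lambda>_. M) g_node
      (\<lambda>i. h_node i M (fst (gE (repl1 G e H) ! i)))"
    by (rule is_repl_repl1[OF is_repl_hg_struct[OF d] e'(1) sM(1)]) (use e'(2) sM(2) in simp)
  have d3: "is_repl (repl1 H e1 M) H {e1} (\<lambda>i. gE H ! i) (\<lambda>_. M) g_node (\<lambda>i. h_node i M (fst (gE H ! i)))"
    by (rule is_repl_repl1[OF sH(1) e1 sM])
  have d': "is_repl (repl1 G e (repl1 H e1 M)) G {e} (\<lambda>i. gE G ! i) (\<lambda>_. repl1 H e1 M) g_node
      (\<lambda>i. h_node i (repl1 H e1 M) (fst (gE G ! i)))"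
    by (rule is_repl_repl1[OF sG e is_repl_hg_struct[OF d3]]) (use sH(2) in simp)
  have "hg_iso (repl1 (repl1 G e H) e' M) (repl1 G e (repl1 H e1 M))"
    by (rule repl1_nested_hg_iso[OF d _ e'(2) d2 d3 d']) (auto simp: hg_iso_refl)
  with e' show ?thesis using that by blast
qed

section \<open>Well-formed graphs and derivable sequents\<close>

definition wf_edges :: "(nat list \<times> tp) multiset \<Rightarrow> bool" where
  "wf_edges M \<longleftrightarrow> (\<forall>x\<in>#M. wf_tp (snd x) \<and> length (fst x) = ttype (snd x))"

lemma wfg_iff_wf_edges: "wfg G \<longleftrightarrow> hg_struct G \<and> wf_edges (mset (gE G))"
  unfolding wfg_def wf_edges_def by fastforce

lemma wfg_hg_struct: "wfg G \<Longrightarrow> hg_struct G"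
  using wfg_iff_wf_edges by blast

lemma wf_edges_diff: "wfg G \<Longrightarrow> wf_edges (mset (gE G) - M)"
  unfolding wfg_iff_wf_edges wf_edges_def by (meson in_diffD)

lemma is_repl_wfg:
  assumes d: "is_repl X G I es Hs \<phi> \<psi>" and w: "wf_edges (mset (gE G) - mset_family I es)"
    and wH: "\<forall>i\<in>I. wfg (Hs i)"
  shows "wfg X"
proof -
  have "wf_edges (mset (gE X))"
    unfolding wf_edges_def
  proof
    fix x assume "x \<in># mset (gE X)"
    then show "wf_tp (snd x) \<and> length (fst x) = ttype (snd x)"
      using w wH unfolding set_mset_mset is_repl_mem_edges[OF d] wf_edges_def wfg_iff_wf_edges by fastforce
  qed
  then show ?thesis using is_repl_hg_struct[OF d] wfg_iff_wf_edges by blast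
qed

lemma wfg_hg_iso:
  assumes w: "wfg G" and iso: "hg_iso G G'"
  shows "wfg G'" "length (gext G') = length (gext G)"
proof -
  obtain f where f: "hg_iso_by G G' f" using iso unfolding hg_iso_iff by blast
  show "wfg G'"
    by (rule is_repl_wfg[OF is_repl_hg_iso_by[OF wfg_hg_struct[OF w] f]])
       (use w wfg_iff_wf_edges in \<open>auto simp: mset_family_def\<close>)
  show "length (gext G') = length (gext G)" using f unfolding hg_iso_by_def by simp
qed

lemma wfg_edge:
  assumes "wfg G" "e < length (gE G)"
  shows "wf_tp (snd (gE G ! e)) \<and> length (fst (gE G ! e)) = ttype (snd (gE G ! e))"
  using assms unfolding wfg_def by (metis nth_mem prod.collapse)

lemma wf_Div_D:
  assumes "wf_tp (Div N D)"
  shows "wf_tp N" "hg_struct D" "length (filter (\<lambda>(a, l). l = None) (gE D)) = 1"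
    "\<And>a t. (a, Some t) \<in> set (gE D) \<Longrightarrow> wf_tp t \<and> length a = ttype t" "ttype N = length (gext D)"
  using assms by (cases rule: wf_tp.cases; auto)+

lemma wf_Times_D:
  assumes "wf_tp (Times M)"
  shows "hg_struct M" "\<And>a t. (a, t) \<in> set (gE M) \<Longrightarrow> wf_tp t \<and> length a = ttype t"
  using assms by (cases rule: wf_tp.cases; auto)+

lemma wf_Times_wfg: "wf_tp (Times M) \<Longrightarrow> wfg M"
  unfolding wfg_def using wf_Times_D by blast

lemma ttype_Times[simp]: "ttype (Times M) = length (gext M)"
  by (simp add: ttype_def)

lemma ttype_Prim[simp]: "ttype (Prim p n) = n"
  by (simp add: ttype_def)

lemma Div_dollar_unique:
  assumes w: "wf_tp (Div N D)" and ij: "i < length (gE D)" "j < length (gE D)"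
    and n: "snd (gE D ! i) = None" "snd (gE D ! j) = None"
  shows "i = j"
proof -
  have "card {k. k < length (gE D) \<and> (\<lambda>(a, l). l = None) (gE D ! k)} = 1"
    using wf_Div_D(3)[OF w] by (simp add: length_filter_conv_card)
  then obtain k where k: "{k. k < length (gE D) \<and> (\<lambda>(a, l). l = None) (gE D ! k)} = {k}"
    by (rule card_1_singletonE)
  have "i \<in> {k}" "j \<in> {k}" unfolding k[symmetric] using ij n by (auto simp: case_prod_beta)
  then show ?thesis by simp
qed

lemma ttype_Div:
  assumes w: "wf_tp (Div N D)" and d0: "d0 < length (gE D)" "snd (gE D ! d0) = None"
  shows "ttype (Div N D) = length (fst (gE D ! d0))"
proof -
  have "find (\<lambda>(a, l). l = None) (gE D) = Some (gE D ! d0)"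
    unfolding find_Some_iff
  proof (intro exI conjI allI impI)
    show "d0 < length (gE D)" by (rule d0(1))
    show "(\<lambda>(a, l). l = None) (gE D ! d0)" using d0(2) by (simp add: case_prod_beta)
    show "gE D ! d0 = gE D ! d0" ..
    fix j assume j: "j < d0"
    show "\<not> (\<lambda>(a, l). l = None) (gE D ! j)"
    proof
      assume "(\<lambda>(a, l). l = None) (gE D ! j)"
      then have "snd (gE D ! j) = None" by (simp add: case_prod_beta)
      then have "j = d0" using Div_dollar_unique[OF w _ d0(1) _ d0(2)] j d0(1) by simp
      then show False using j by simp
    qed
  qed
  then show ?thesis unfolding ttype_def by (simp add: case_prod_beta split: prod.splits)
qed

lemma Div_edge_Some:
  assumes w: "wf_tp (Div N D)" and d0: "d0 < length (gE D)" "snd (gE D ! d0) = None"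
    and j: "j < length (gE D)" "j \<noteq> d0"
  shows "\<exists>t. snd (gE D ! j) = Some t \<and> wf_tp t \<and> length (fst (gE D ! j)) = ttype t"
proof -
  obtain t where t: "snd (gE D ! j) = Some t"
    using Div_dollar_unique[OF w j(1) d0(1) _ d0(2)] j(2) by (cases "snd (gE D ! j)") auto
  have "(fst (gE D ! j), Some t) \<in> set (gE D)" using j(1) t by (metis nth_mem prod.collapse)
  then show ?thesis using wf_Div_D(4)[OF w] t by blast
qed

lemma wfg_Times_edge:
  assumes "wfg G" "e < length (gE G)" "snd (gE G ! e) = Times M"
  shows "wfg M" "hg_struct M" "length (fst (gE G ! e)) = length (gext M)"
  using wfg_edge[OF assms(1,2)] assms(3) wf_Times_wfg wfg_iff_wf_edges by auto

lemma wfg_repl1: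
  assumes "wfg G" "e < length (gE G)" "wfg H" "length (fst (gE G ! e)) = length (gext H)"
  shows "wfg (repl1 G e H)"
  by (rule is_repl_wfg[OF is_repl_repl1[OF wfg_hg_struct[OF assms(1)] assms(2) wfg_hg_struct[OF assms(3)] assms(4)]])
     (use wf_edges_diff[OF assms(1)] assms(3) in auto)

lemma plug_host:
  assumes wD: "wf_tp (Div N D)" and d0: "d0 < length (gE D)" "snd (gE D ! d0) = None"
  shows "hg_struct (map_hgraph the D)" "d0 < length (gE (map_hgraph the D))"
    "length (fst (gE (map_hgraph the D) ! d0)) = ttype (Div N D)"
  using wf_Div_D(2)[OF wD] d0 ttype_Div[OF wD d0] by (simp_all add: case_prod_beta)

lemma is_repl_plug:
  assumes wD: "wf_tp (Div N D)" and d0: "d0 < length (gE D)" "snd (gE D ! d0) = None"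
    and sF: "hg_struct F" and lF: "length (gext F) = ttype (Div N D)"
  shows "is_repl (plug D d0 F) (map_hgraph the D) {d0} (\<lambda>i. gE (map_hgraph the D) ! i) (\<lambda>_. F) g_node
     (\<lambda>i. h_node i F (fst (gE (map_hgraph the D) ! i)))"
  unfolding plug_def by (rule is_repl_repl1[OF plug_host(1,2)[OF wD d0] sF]) (use plug_host(3)[OF wD d0] lF in simp)

lemma wf_edges_plug_rest:
  assumes wD: "wf_tp (Div N D)" and d0: "d0 < length (gE D)" "snd (gE D ! d0) = None"
  shows "wf_edges (mset (gE (map_hgraph the D)) - mset_family {d0} (\<lambda>i. gE (map_hgraph the D) ! i))"
  unfolding wf_edges_def
proof
  fix x assume "x \<in># mset (gE (map_hgraph the D)) - mset_family {d0} (\<lambda>i. gE (map_hgraph the D) ! i)"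
  then have "x \<in># mset (gE (map_hgraph the D)) - {#gE (map_hgraph the D) ! d0#}" by simp
  from mem_diff_nth_idx[OF this] d0 obtain i where i: "i < length (gE D)" "i \<noteq> d0" "gE (map_hgraph the D) ! i = x"
    by auto
  obtain t where t: "snd (gE D ! i) = Some t" "wf_tp t" "length (fst (gE D ! i)) = ttype t"
    using Div_edge_Some[OF wD d0 i(1,2)] by blast
  have "x = (fst (gE D ! i), t)" using i(1,3) t(1) by (auto simp: case_prod_beta)
  then show "wf_tp (snd x) \<and> length (fst x) = ttype (snd x)" using t by simp
qed

lemma wfg_plug:
  assumes wD: "wf_tp (Div N D)" and d0: "d0 < length (gE D)" "snd (gE D ! d0) = None"
    and wF: "wfg F" and lF: "length (gext F) = ttype (Div N D)"
  shows "wfg (plug D d0 F)"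
  by (rule is_repl_wfg[OF is_repl_plug[OF wD d0 _ lF] wf_edges_plug_rest[OF wD d0]]) (use wF wfg_iff_wf_edges in auto)

lemma fill_simps:
  "gV (fill D A) = gV D" "gext (fill D A) = gext D" "length (gE (fill D A)) = length (gE D)"
  "j < length (gE D) \<Longrightarrow> gE (fill D A) ! j = (fst (gE D ! j), case snd (gE D ! j) of None \<Rightarrow> A | Some t \<Rightarrow> t)"
  "hg_struct (fill D A) = hg_struct D"
  by (simp_all add: fill_def case_prod_beta)

(* D[d0 := N div D][d1/H1, ..., dk/Hk], the graph substituted for the edge e by the rule DivL. *)
definition divL_part :: "tp \<Rightarrow> tp option hgraph \<Rightarrow> nat \<Rightarrow> (nat \<Rightarrow> tp hgraph) \<Rightarrow> tp hgraph" where
  "divL_part N D d0 Hs = repl (fill D (Div N D)) (\<lambda>j. if j < length (gE D) \<and> j \<noteq> d0 then Some (Hs j) else None)"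

lemma is_repl_divL_part:
  assumes wD: "wf_tp (Div N D)" and d0: "d0 < length (gE D)" "snd (gE D ! d0) = None"
    and hs: "\<forall>j<length (gE D). j \<noteq> d0 \<longrightarrow> hg_struct (Hs j) \<and> length (gext (Hs j)) = ttype (the (snd (gE D ! j)))"
  shows "is_repl (divL_part N D d0 Hs) (fill D (Div N D)) ({..<length (gE D)} - {d0})
     (\<lambda>j. gE (fill D (Div N D)) ! j) Hs g_node (\<lambda>j. h_node j (Hs j) (fst (gE (fill D (Div N D)) ! j)))"
  unfolding divL_part_def
proof (rule is_repl_repl_on)
  show "hg_struct (fill D (Div N D))" using wf_Div_D(2)[OF wD] by (simp add: fill_simps)
  fix j assume "j \<in> {..<length (gE D)} - {d0}"
  then show "hg_struct (Hs j) \<and> length (fst (gE (fill D (Div N D)) ! j)) = length (gext (Hs j))"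
    using hs Div_edge_Some[OF wD d0] by (force simp: fill_simps)
qed (auto simp: fill_simps)

lemma divL_part_rest_edges:
  assumes "d0 < length (gE D)" "snd (gE D ! d0) = None"
  shows "mset (gE (fill D (Div N D))) - mset_family ({..<length (gE D)} - {d0}) (\<lambda>j. gE (fill D (Div N D)) ! j)
      = {#(fst (gE D ! d0), Div N D)#}"
  using mset_nth_split[of d0 "gE (fill D (Div N D))"] assms by (simp add: fill_simps)

lemma wfg_divL_part:
  assumes wD: "wf_tp (Div N D)" and d0: "d0 < length (gE D)" "snd (gE D ! d0) = None"
    and wHs: "\<forall>j<length (gE D). j \<noteq> d0 \<longrightarrow> wfg (Hs j) \<and> length (gext (Hs j)) = ttype (the (snd (gE D ! j)))"
  shows "wfg (divL_part N D d0 Hs)"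
proof (rule is_repl_wfg[OF is_repl_divL_part[OF wD d0]])
  show "\<forall>j<length (gE D). j \<noteq> d0 \<longrightarrow> hg_struct (Hs j) \<and> length (gext (Hs j)) = ttype (the (snd (gE D ! j)))"
    using wHs wfg_hg_struct by blast
  show "wf_edges (mset (gE (fill D (Div N D))) - mset_family ({..<length (gE D)} - {d0}) (\<lambda>j. gE (fill D (Div N D)) ! j))"
    unfolding divL_part_rest_edges[OF d0] wf_edges_def using wD ttype_Div[OF wD d0] by simp
qed (use wHs in auto)

lemma is_repl_divL_graph:
  assumes wH: "wfg H" and e: "e < length (gE H)" "snd (gE H ! e) = N"
    and wD: "wf_tp (Div N D)" and d0: "d0 < length (gE D)" "snd (gE D ! d0) = None"
    and hs: "\<forall>j<length (gE D). j \<noteq> d0 \<longrightarrow> hg_struct (Hs j) \<and> length (gext (Hs j)) = ttype (the (snd (gE D ! j)))"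
  shows "\<exists>\<phi> \<psi>. is_repl (divL_graph H e N D d0 Hs) H {e} (\<lambda>i. gE H ! i) (\<lambda>_. divL_part N D d0 Hs) \<phi> \<psi>"
proof -
  define K where "K = fill D (Div N D)"
  define Y where "Y = repl1 H e K"
  define J where "J = {..<length (gE D)} - {d0}"
  have lK: "length (gE K) = length (gE D)" unfolding K_def by (simp add: fill_simps)
  have d1: "is_repl Y H {e} (\<lambda>i. gE H ! i) (\<lambda>_. K) g_node (\<lambda>i. h_node i K (fst (gE H ! i)))"
    unfolding Y_def K_def
    by (rule is_repl_repl1) (use wfg_hg_struct[OF wH] wf_Div_D[OF wD] wfg_edge[OF wH e(1)] e in \<open>auto simp: fill_simps\<close>)
  have Yj: "gE Y ! (e + j) = map_edge (h_node e K (fst (gE H ! e))) (gE K ! j)" if "j < length (gE D)" for j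
    unfolding Y_def by (rule gE_repl1_nth[OF e(1)]) (use that lK in simp)
  have d2: "is_repl (divL_graph H e N D d0 Hs) Y ((\<lambda>j. e + j) ` J) (\<lambda>i. gE Y ! i) (\<lambda>i. Hs (i - e)) g_node
      (\<lambda>i. h_node i (Hs (i - e)) (fst (gE Y ! i)))"
    unfolding divL_graph_def K_def[symmetric] Y_def[symmetric]
  proof (rule is_repl_repl_on)
    show "hg_struct Y" by (rule is_repl_hg_struct[OF d1])
    show "(\<lambda>j. e + j) ` J \<subseteq> {..<length (gE Y)}"
      unfolding Y_def using length_gE_repl1[OF e(1)] e(1) lK by (auto simp: J_def)
    show "(if e \<le> i \<and> i < e + length (gE D) \<and> i \<noteq> e + d0 then Some (Hs (i - e)) else None)
        = (if i \<in> (\<lambda>j. e + j) ` J then Some (Hs (i - e)) else None)" for i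
      by (auto simp: J_def image_iff Bex_def intro!: exI[of _ "i - e"])
    fix i assume "i \<in> (\<lambda>j. e + j) ` J"
    then obtain j where j: "i = e + j" "j < length (gE D)" "j \<noteq> d0" unfolding J_def by blast
    then show "hg_struct (Hs (i - e)) \<and> length (fst (gE Y ! i)) = length (gext (Hs (i - e)))"
      using hs[rule_format, OF j(2,3)] Div_edge_Some[OF wD d0 j(2,3)] Yj[OF j(2)] unfolding K_def by (auto simp: fill_simps)
  qed
  have b: "bij_betw (\<lambda>j. e + j) J ((\<lambda>j. e + j) ` J)" by (simp add: bij_betw_def inj_on_def)
  have d2': "is_repl (divL_graph H e N D d0 Hs) Y J (\<lambda>j. gE Y ! (e + j)) Hs g_node
      (\<lambda>j. h_node (e + j) (Hs j) (fst (gE Y ! (e + j))))"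
    using is_repl_reindex[OF d2 b] by (simp add: comp_def)
  obtain \<psi>' where "is_repl (divL_graph H e N D d0 Hs) H {e} (\<lambda>i. gE H ! i) ((\<lambda>_. K)(e := divL_part N D d0 Hs))
      (g_node \<circ> g_node) \<psi>'"
    using is_repl_compose_nested[OF d1 d2' _ _ is_repl_divL_part[OF wD d0 hs, folded K_def J_def]] Yj by (auto simp: J_def)
  then have "is_repl (divL_graph H e N D d0 Hs) H {e} (\<lambda>i. gE H ! i) (\<lambda>_. divL_part N D d0 Hs) (g_node \<circ> g_node) \<psi>'"
    by (rule is_repl_cong) auto
  then show ?thesis by blast
qed

lemma wfg_divL_graph:
  assumes wH: "wfg H" and e: "e < length (gE H)" "snd (gE H ! e) = N"
    and wD: "wf_tp (Div N D)" and d0: "d0 < length (gE D)" "snd (gE D ! d0) = None"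
    and wHs: "\<forall>j<length (gE D). j \<noteq> d0 \<longrightarrow> wfg (Hs j) \<and> length (gext (Hs j)) = ttype (the (snd (gE D ! j)))"
  shows "wfg (divL_graph H e N D d0 Hs)"
proof -
  obtain \<phi> \<psi> where "is_repl (divL_graph H e N D d0 Hs) H {e} (\<lambda>i. gE H ! i) (\<lambda>_. divL_part N D d0 Hs) \<phi> \<psi>"
    using is_repl_divL_graph[OF wH e wD d0] wHs wfg_hg_struct by blast
  then show ?thesis
    by (rule is_repl_wfg) (use wf_edges_diff[OF wH] wfg_divL_part[OF wD d0 wHs] in auto)
qed

lemma repl1_divL_part_hg_iso:
  assumes wD: "wf_tp (Div N D)" and d0: "d0 < length (gE D)" "snd (gE D ! d0) = None"
    and hs: "\<forall>j<length (gE D). j \<noteq> d0 \<longrightarrow> hg_struct (Hs j) \<and> length (gext (Hs j)) = ttype (the (snd (gE D ! j)))"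
    and j: "j < length (gE D)" "j \<noteq> d0" and e3: "e3 < length (gE (Hs j))"
    and sM: "hg_struct M" "length (fst (gE (Hs j) ! e3)) = length (gext M)"
    and e2: "e2 < length (gE (divL_part N D d0 Hs))"
      "gE (divL_part N D d0 Hs) ! e2 = map_edge (h_node j (Hs j) (fst (gE (fill D (Div N D)) ! j))) (gE (Hs j) ! e3)"
  shows "hg_iso (repl1 (divL_part N D d0 Hs) e2 M) (divL_part N D d0 (Hs(j := repl1 (Hs j) e3 M)))"
proof -
  define Hs' where "Hs' = Hs(j := repl1 (Hs j) e3 M)"
  have d3: "is_repl (repl1 (Hs j) e3 M) (Hs j) {e3} (\<lambda>i. gE (Hs j) ! i) (\<lambda>_. M) g_node
      (\<lambda>i. h_node i M (fst (gE (Hs j) ! i)))"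
    by (rule is_repl_repl1[OF conjunct1[OF hs[rule_format, OF j]] e3 sM])
  have hs': "\<forall>i<length (gE D). i \<noteq> d0 \<longrightarrow> hg_struct (Hs' i) \<and> length (gext (Hs' i)) = ttype (the (snd (gE D ! i)))"
    using hs is_repl_hg_struct[OF d3] by (auto simp: Hs'_def)
  note dK = is_repl_divL_part[OF wD d0 hs]
  have lZ: "length (fst (gE (divL_part N D d0 Hs) ! e2)) = length (gext M)" using e2(2) sM(2) by simp
  have d2: "is_repl (repl1 (divL_part N D d0 Hs) e2 M) (divL_part N D d0 Hs) {e2} (\<lambda>i. gE (divL_part N D d0 Hs) ! i)
      (\<lambda>_. M) g_node (\<lambda>i. h_node i M (fst (gE (divL_part N D d0 Hs) ! i)))"
    by (rule is_repl_repl1[OF is_repl_hg_struct[OF dK] e2(1) sM(1) lZ])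
  show ?thesis unfolding Hs'_def[symmetric]
    by (rule repl1_nested_hg_iso[OF dK _ e2(2) d2 d3 is_repl_divL_part[OF wD d0 hs']])
       (use j in \<open>auto simp: Hs'_def hg_iso_refl\<close>)
qed

lemma divL_part_edge_Times:
  assumes wD: "wf_tp (Div N D)" and d0: "d0 < length (gE D)" "snd (gE D ! d0) = None"
    and hs: "\<forall>j<length (gE D). j \<noteq> d0 \<longrightarrow> hg_struct (Hs j) \<and> length (gext (Hs j)) = ttype (the (snd (gE D ! j)))"
    and e2: "e2 < length (gE (divL_part N D d0 Hs))" "snd (gE (divL_part N D d0 Hs) ! e2) = Times M"
  obtains j e3 where "j < length (gE D)" "j \<noteq> d0" "e3 < length (gE (Hs j))"
    "gE (divL_part N D d0 Hs) ! e2 = map_edge (h_node j (Hs j) (fst (gE (fill D (Div N D)) ! j))) (gE (Hs j) ! e3)"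
proof -
  let ?Z = "divL_part N D d0 Hs" and ?K = "fill D (Div N D)"
  have dZ: "is_repl ?Z ?K ({..<length (gE D)} - {d0}) (\<lambda>j. gE ?K ! j) Hs g_node (\<lambda>j. h_node j (Hs j) (fst (gE ?K ! j)))"
    by (rule is_repl_divL_part[OF wD d0 hs])
  have "(\<exists>y. y \<in># {#(fst (gE D ! d0), Div N D)#} \<and> gE ?Z ! e2 = map_edge g_node y)
      \<or> (\<exists>j\<in>{..<length (gE D)} - {d0}. \<exists>y\<in>set (gE (Hs j)).
            gE ?Z ! e2 = map_edge (h_node j (Hs j) (fst (gE ?K ! j))) y)"
    using is_repl_mem_edges[OF dZ, THEN iffD1, OF nth_mem[OF e2(1)]] unfolding divL_part_rest_edges[OF d0] .
  then obtain j y where j: "j < length (gE D)" "j \<noteq> d0" and y: "y \<in> set (gE (Hs j))"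
    "gE ?Z ! e2 = map_edge (h_node j (Hs j) (fst (gE ?K ! j))) y"
    using e2(2) by auto
  obtain e3 where "e3 < length (gE (Hs j))" "gE (Hs j) ! e3 = y" using y(1) by (metis in_set_conv_nth)
  then show ?thesis using that j y(2) by blast
qed

lemma is_repl_TimesR_graph:
  assumes w: "wf_tp (Times M)"
    and hs: "\<forall>i<length (gE M). hg_struct (Hs i) \<and> length (gext (Hs i)) = ttype (snd (gE M ! i))"
  shows "is_repl (repl M (\<lambda>i. if i < length (gE M) then Some (Hs i) else None)) M {..<length (gE M)}
     (\<lambda>i. gE M ! i) Hs g_node (\<lambda>i. h_node i (Hs i) (fst (gE M ! i)))"
proof (rule is_repl_repl_on)
  show "hg_struct M" by (rule wf_Times_D(1)[OF w])
  fix i assume "i \<in> {..<length (gE M)}"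
  then show "hg_struct (Hs i) \<and> length (fst (gE M ! i)) = length (gext (Hs i))"
    using hs wf_Times_D(2)[OF w] by (metis lessThan_iff nth_mem prod.collapse)
qed auto

lemma wfg_TimesR_graph:
  assumes w: "wf_tp (Times M)"
    and wHs: "\<forall>i<length (gE M). wfg (Hs i) \<and> length (gext (Hs i)) = ttype (snd (gE M ! i))"
  shows "wfg (repl M (\<lambda>i. if i < length (gE M) then Some (Hs i) else None))"
proof (rule is_repl_wfg[OF is_repl_TimesR_graph[OF w]])
  show "wf_edges (mset (gE M) - mset_family {..<length (gE M)} (\<lambda>i. gE M ! i))"
    unfolding mset_eq_mset_family_nth[of "gE M", symmetric] by (simp add: wf_edges_def)
qed (use wHs wfg_hg_struct in auto)

lemma HL_wf: "HL G A \<Longrightarrow> wfg G \<and> wf_tp A \<and> length (gext G) = ttype A"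
proof (induction rule: HL.induct)
  case (Ax p n)
  show ?case by (auto simp: wfg_def hg_struct_def handle_def intro: wf_tp.wf_Prim)
next
  case (Iso G A G')
  then show ?case using wfg_hg_iso by metis
next
  case (DivL H A e N D d0 Hs)
  then have "wfg (divL_graph H e N D d0 Hs)" by (intro wfg_divL_graph) auto
  then show ?case using DivL.IH(1) by (simp add: divL_graph_def)
next
  case (TimesR M Hs)
  have "wfg (repl M (\<lambda>i. if i < length (gE M) then Some (Hs i) else None))"
    by (rule wfg_TimesR_graph[OF TimesR.hyps(1)]) (use TimesR.IH in blast)
  then show ?case using TimesR.hyps(1) by simp
qed simp_all

section \<open>Inversion of TimesL\<close>

definition TimesL_invertible :: "tp hgraph \<Rightarrow> tp \<Rightarrow> bool" where
  "TimesL_invertible H C \<longleftrightarrow>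
     (\<forall>e0 M. e0 < length (gE H) \<longrightarrow> snd (gE H ! e0) = Times M \<longrightarrow> HL (repl1 H e0 M) C)"

lemma TimesL_invertible_hg_iso:
  assumes inv: "TimesL_invertible G A" and HL: "HL G A" and iso: "hg_iso G G'"
  shows "TimesL_invertible G' A"
  unfolding TimesL_invertible_def
proof (intro allI impI)
  fix e' M assume e': "e' < length (gE G')" and l: "snd (gE G' ! e') = Times M"
  obtain f where f: "hg_iso_by G G' f" using iso unfolding hg_iso_iff by blast
  obtain e where e: "e < length (gE G)" "gE G' ! e' = map_edge f (gE G ! e)" by (rule hg_iso_by_edge[OF f e'])
  have le: "snd (gE G ! e) = Times M" using l e(2) by simp
  have wG: "wfg G" and wG': "wfg G'" using HL_wf[OF HL] HL_wf[OF HL.Iso[OF HL iso]] by blast+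
  have "hg_iso (repl1 G e M) (repl1 G' e' M)"
    by (rule repl1_hg_iso[OF f wfg_hg_struct[OF wG] wfg_hg_struct[OF wG'] e(1) e' e(2)])
       (use wfg_Times_edge[OF wG e(1) le] in auto)
  moreover have "HL (repl1 G e M) A" using inv e(1) le unfolding TimesL_invertible_def by blast
  ultimately show "HL (repl1 G' e' M) A" using HL.Iso by blast
qed

lemma TimesL_invertible_TimesL:
  assumes inv: "TimesL_invertible (repl1 G e F) A" and HL: "HL (repl1 G e F) A"
    and wG: "wfg G" and e: "e < length (gE G)" "snd (gE G ! e) = Times F"
  shows "TimesL_invertible G A"
  unfolding TimesL_invertible_def
proof (intro allI impI)
  fix e0 M assume e0: "e0 < length (gE G)" and l: "snd (gE G ! e0) = Times M"
  show "HL (repl1 G e0 M) A"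
  proof (cases "e0 = e")
    case True
    then show ?thesis using HL l e(2) by simp
  next
    case False
    note tmF = wfg_Times_edge[OF wG e] and tmM = wfg_Times_edge[OF wG e0 l]
    obtain e0' e' where e0': "e0' < length (gE (repl1 G e F))" "gE (repl1 G e F) ! e0' = map_edge g_node (gE G ! e0)"
      and e': "e' < length (gE (repl1 G e0 M))" "gE (repl1 G e0 M) ! e' = map_edge g_node (gE G ! e)"
      and iso: "hg_iso (repl1 (repl1 G e F) e0' M) (repl1 (repl1 G e0 M) e' F)"
      using repl1_commute[OF wfg_hg_struct[OF wG] e(1) e0] False tmF(2,3) tmM(2,3) by metis
    have "HL (repl1 (repl1 G e F) e0' M) A" using inv e0' l unfolding TimesL_invertible_def by simp
    then have "HL (repl1 (repl1 G e0 M) e' F) A" using iso by (rule HL.Iso)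
    then show ?thesis
      by (rule HL.TimesL[OF _ wfg_repl1[OF wG e0 tmM(1,3)] e'(1)]) (use e'(2) e(2) in simp)
  qed
qed

lemma TimesL_invertible_DivR:
  assumes inv: "TimesL_invertible (plug D d0 F) N" and wD: "wf_tp (Div N D)"
    and d0: "d0 < length (gE D)" "snd (gE D ! d0) = None"
    and wF: "wfg F" and lF: "length (gext F) = ttype (Div N D)"
  shows "TimesL_invertible F (Div N D)"
  unfolding TimesL_invertible_def
proof (intro allI impI)
  fix e0 M assume e0: "e0 < length (gE F)" and l: "snd (gE F ! e0) = Times M"
  note tm = wfg_Times_edge[OF wF e0 l]
  have lD: "length (fst (gE (map_hgraph the D) ! d0)) = length (gext F)" using plug_host(3)[OF wD d0] lF by simp
  obtain e' where e': "e' < length (gE (plug D d0 F))"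
    "gE (plug D d0 F) ! e' = map_edge (h_node d0 F (fst (gE (map_hgraph the D) ! d0))) (gE F ! e0)"
    and iso: "hg_iso (repl1 (plug D d0 F) e' M) (plug D d0 (repl1 F e0 M))"
    using repl1_assoc[OF plug_host(1,2)[OF wD d0] wfg_hg_struct[OF wF] lD e0 tm(2,3)] unfolding plug_def by blast
  have "HL (repl1 (plug D d0 F) e' M) N" using inv e' l unfolding TimesL_invertible_def by simp
  then have "HL (plug D d0 (repl1 F e0 M)) N" using iso by (rule HL.Iso)
  then show "HL (repl1 F e0 M) (Div N D)"
    by (rule HL.DivR[OF _ wD d0 wfg_repl1[OF wF e0 tm(1,3)]]) (use lF in simp)
qed

lemma TimesL_invertible_TimesR:
  assumes w: "wf_tp (Times M')"
    and Hs: "\<forall>i<length (gE M'). HL (Hs i) (snd (gE M' ! i)) \<and> TimesL_invertible (Hs i) (snd (gE M' ! i))"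
  shows "TimesL_invertible (repl M' (\<lambda>i. if i < length (gE M') then Some (Hs i) else None)) (Times M')"
  unfolding TimesL_invertible_def
proof (intro allI impI)
  let ?X = "repl M' (\<lambda>i. if i < length (gE M') then Some (Hs i) else None)"
  fix e0 M assume e0: "e0 < length (gE ?X)" and l: "snd (gE ?X ! e0) = Times M"
  have hs: "\<forall>i<length (gE M'). hg_struct (Hs i) \<and> length (gext (Hs i)) = ttype (snd (gE M' ! i))"
    using Hs HL_wf wfg_hg_struct by blast
  have dM: "is_repl ?X M' {..<length (gE M')} (\<lambda>i. gE M' ! i) Hs g_node (\<lambda>i. h_node i (Hs i) (fst (gE M' ! i)))"
    by (rule is_repl_TimesR_graph[OF w hs])
  have "mset (gE M') - mset_family {..<length (gE M')} (\<lambda>i. gE M' ! i) = {#}"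
    using mset_eq_mset_family_nth[of "gE M'"] by simp
  then obtain i y where i: "i < length (gE M')" and y: "y \<in> set (gE (Hs i))"
    "gE ?X ! e0 = map_edge (h_node i (Hs i) (fst (gE M' ! i))) y"
    using nth_mem[OF e0] unfolding is_repl_mem_edges[OF dM] by auto
  obtain e1 where e1: "e1 < length (gE (Hs i))" "gE (Hs i) ! e1 = y" using y(1) by (metis in_set_conv_nth)
  have l1: "snd (gE (Hs i) ! e1) = Times M" using l y(2) e1(2) by simp
  have wHi: "wfg (Hs i)" using HL_wf Hs i by blast
  note tm = wfg_Times_edge[OF wHi e1(1) l1]
  define Hs' where "Hs' = Hs(i := repl1 (Hs i) e1 M)"
  have HLs': "\<forall>i'<length (gE M'). HL (Hs' i') (snd (gE M' ! i'))"
    using Hs i e1(1) l1 unfolding Hs'_def TimesL_invertible_def by auto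
  define X' where "X' = repl M' (\<lambda>i. if i < length (gE M') then Some (Hs' i) else None)"
  have "HL X' (Times M')" unfolding X'_def by (rule HL.TimesR[OF w]) (use HLs' in blast)
  moreover have "hg_iso X' (repl1 ?X e0 M)"
  proof (rule hg_iso_sym)
    have dX0: "is_repl (repl1 ?X e0 M) ?X {e0} (\<lambda>i. gE ?X ! i) (\<lambda>_. M) g_node (\<lambda>i. h_node i M (fst (gE ?X ! i)))"
      by (rule is_repl_repl1[OF is_repl_hg_struct[OF dM] e0 tm(2)]) (use y(2) e1(2) tm(3) in simp)
    then show "hg_struct (repl1 ?X e0 M)" by (rule is_repl_hg_struct)
    have dM': "is_repl X' M' {..<length (gE M')} (\<lambda>i. gE M' ! i) Hs' g_node (\<lambda>i. h_node i (Hs' i) (fst (gE M' ! i)))"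
      unfolding X'_def by (rule is_repl_TimesR_graph[OF w]) (use HLs' HL_wf wfg_hg_struct in blast)
    show "hg_iso (repl1 ?X e0 M) X'"
      by (rule repl1_nested_hg_iso[OF dM _ _ dX0 is_repl_repl1[OF wfg_hg_struct[OF wHi] e1(1) tm(2,3)] dM'])
         (use i y(2) e1(2) in \<open>auto simp: Hs'_def hg_iso_refl\<close>)
  qed
  ultimately show "HL (repl1 ?X e0 M) (Times M')" by (rule HL.Iso)
qed

lemma HL_repl1_divL_graph_outer:
  assumes HL1: "HL (repl1 H e1 M) A" and wH: "wfg H" and e: "e < length (gE H)" "snd (gE H ! e) = N"
    and wD: "wf_tp (Div N D)" and d0: "d0 < length (gE D)" "snd (gE D ! d0) = None"
    and HLs: "\<forall>j<length (gE D). j \<noteq> d0 \<longrightarrow> HL (Hs j) (the (snd (gE D ! j)))"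
    and e1: "e1 < length (gE H)" "e1 \<noteq> e" "snd (gE H ! e1) = Times M"
    and d: "is_repl (divL_graph H e N D d0 Hs) H {e} (\<lambda>i. gE H ! i) (\<lambda>_. divL_part N D d0 Hs) \<phi> \<psi>"
    and e0: "e0 < length (gE (divL_graph H e N D d0 Hs))" "gE (divL_graph H e N D d0 Hs) ! e0 = map_edge \<phi> (gE H ! e1)"
  shows "HL (repl1 (divL_graph H e N D d0 Hs) e0 M) A"
proof -
  let ?X = "divL_graph H e N D d0 Hs"
  have hs: "\<forall>j<length (gE D). j \<noteq> d0 \<longrightarrow> hg_struct (Hs j) \<and> length (gext (Hs j)) = ttype (the (snd (gE D ! j)))"
    using HLs HL_wf wfg_hg_struct by blast
  note tm = wfg_Times_edge[OF wH e1(1,3)]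
  define Y where "Y = repl1 H e1 M"
  have d1: "is_repl Y H {e1} (\<lambda>i. gE H ! i) (\<lambda>_. M) g_node (\<lambda>i. h_node i M (fst (gE H ! i)))"
    unfolding Y_def by (rule is_repl_repl1[OF wfg_hg_struct[OF wH] e1(1) tm(2,3)])
  have wY: "wfg Y" unfolding Y_def by (rule wfg_repl1[OF wH e1(1) tm(1,3)])
  obtain e' where e': "e' < length (gE Y)" "gE Y ! e' = map_edge g_node (gE H ! e)"
    using is_repl_edge_kept[OF d1] nth_mem_diff_nth[OF e(1) e1(1)] e1(2) by fastforce
  have le': "snd (gE Y ! e') = N" using e'(2) e(2) by simp
  have "HL (divL_graph Y e' N D d0 Hs) A"
    by (rule HL.DivL[OF HL1[folded Y_def] wY e'(1) le' wD d0]) (use HLs in blast)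
  moreover have "hg_iso (divL_graph Y e' N D d0 Hs) (repl1 ?X e0 M)"
  proof -
    obtain \<phi>2 \<psi>2 where d2: "is_repl (divL_graph Y e' N D d0 Hs) Y {e'} (\<lambda>i. gE Y ! i)
        (\<lambda>_. divL_part N D d0 Hs) \<phi>2 \<psi>2"
      using is_repl_divL_graph[OF wY e'(1) le' wD d0 hs] by blast
    have dX0: "is_repl (repl1 ?X e0 M) ?X {e0} (\<lambda>i. gE ?X ! i) (\<lambda>_. M) g_node (\<lambda>i. h_node i M (fst (gE ?X ! i)))"
      by (rule is_repl_repl1[OF is_repl_hg_struct[OF d] e0(1) tm(2)]) (use e0(2) tm(3) in simp)
    show ?thesis by (rule repl1_swap_hg_iso[OF d1 d e1(1) e(1) e1(2) e'(2) e0(2) d2 dX0])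
  qed
  ultimately show ?thesis by (rule HL.Iso)
qed

lemma HL_repl1_divL_graph_inner:
  assumes HL: "HL H A" and wH: "wfg H" and e: "e < length (gE H)" "snd (gE H ! e) = N"
    and wD: "wf_tp (Div N D)" and d0: "d0 < length (gE D)" "snd (gE D ! d0) = None"
    and HLs: "\<forall>j<length (gE D). j \<noteq> d0 \<longrightarrow> HL (Hs j) (the (snd (gE D ! j)))"
    and j: "j < length (gE D)" "j \<noteq> d0" and e3: "e3 < length (gE (Hs j))" "snd (gE (Hs j) ! e3) = Times M"
    and HL3: "HL (repl1 (Hs j) e3 M) (the (snd (gE D ! j)))"
    and d: "is_repl (divL_graph H e N D d0 Hs) H {e} (\<lambda>i. gE H ! i) (\<lambda>_. divL_part N D d0 Hs) \<phi> \<psi>"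
    and e2: "e2 < length (gE (divL_part N D d0 Hs))"
      "gE (divL_part N D d0 Hs) ! e2 = map_edge (h_node j (Hs j) (fst (gE (fill D (Div N D)) ! j))) (gE (Hs j) ! e3)"
    and e0: "e0 < length (gE (divL_graph H e N D d0 Hs))" "gE (divL_graph H e N D d0 Hs) ! e0 = map_edge (\<psi> e) (gE (divL_part N D d0 Hs) ! e2)"
  shows "HL (repl1 (divL_graph H e N D d0 Hs) e0 M) A"
proof -
  let ?X = "divL_graph H e N D d0 Hs"
  define Hs' where "Hs' = Hs(j := repl1 (Hs j) e3 M)"
  have wHj: "wfg (Hs j)" using HL_wf[OF HLs[rule_format, OF j]] by blast
  note tm = wfg_Times_edge[OF wHj e3]
  have HLs': "\<forall>i<length (gE D). i \<noteq> d0 \<longrightarrow> HL (Hs' i) (the (snd (gE D ! i)))"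
    using HLs HL3 by (auto simp: Hs'_def)
  have hs: "\<forall>j<length (gE D). j \<noteq> d0 \<longrightarrow> hg_struct (Hs j) \<and> length (gext (Hs j)) = ttype (the (snd (gE D ! j)))"
    and hs': "\<forall>j<length (gE D). j \<noteq> d0 \<longrightarrow> hg_struct (Hs' j) \<and> length (gext (Hs' j)) = ttype (the (snd (gE D ! j)))"
    using HLs HLs' HL_wf wfg_hg_struct by blast+
  have "HL (divL_graph H e N D d0 Hs') A"
    by (rule HL.DivL[OF HL wH e wD d0]) (use HLs' in blast)
  moreover have "hg_iso (divL_graph H e N D d0 Hs') (repl1 ?X e0 M)"
  proof (rule hg_iso_sym)
    obtain \<phi>' \<psi>' where d': "is_repl (divL_graph H e N D d0 Hs') H {e} (\<lambda>i. gE H ! i)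
        (\<lambda>_. divL_part N D d0 Hs') \<phi>' \<psi>'"
      using is_repl_divL_graph[OF wH e wD d0 hs'] by blast
    have sZ: "hg_struct (divL_part N D d0 Hs)" by (rule is_repl_hg_struct[OF is_repl_divL_part[OF wD d0 hs]])
    have dW: "is_repl (repl1 (divL_part N D d0 Hs) e2 M) (divL_part N D d0 Hs) {e2}
        (\<lambda>i. gE (divL_part N D d0 Hs) ! i) (\<lambda>_. M) g_node (\<lambda>i. h_node i M (fst (gE (divL_part N D d0 Hs) ! i)))"
      by (rule is_repl_repl1[OF sZ e2(1) tm(2)]) (use e2(2) tm(3) in simp)
    have dX0: "is_repl (repl1 ?X e0 M) ?X {e0} (\<lambda>i. gE ?X ! i) (\<lambda>_. M) g_node (\<lambda>i. h_node i M (fst (gE ?X ! i)))"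
      by (rule is_repl_repl1[OF is_repl_hg_struct[OF d] e0(1) tm(2)]) (use e0(2) e2(2) tm(3) in simp)
    then show "hg_struct (repl1 ?X e0 M)" by (rule is_repl_hg_struct)
    have "hg_iso (repl1 (divL_part N D d0 Hs) e2 M) (divL_part N D d0 Hs')"
      unfolding Hs'_def by (rule repl1_divL_part_hg_iso[OF wD d0 hs j e3(1) tm(2,3) e2])
    then show "hg_iso (repl1 ?X e0 M) (divL_graph H e N D d0 Hs')"
      by (intro repl1_nested_hg_iso[OF d _ e0(2) dX0 dW d']) auto
  qed
  ultimately show ?thesis by (rule HL.Iso)
qed

lemma TimesL_invertible_DivL:
  assumes HL: "HL H A" and inv: "TimesL_invertible H A" and wH: "wfg H"
    and e: "e < length (gE H)" "snd (gE H ! e) = N"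
    and wD: "wf_tp (Div N D)" and d0: "d0 < length (gE D)" "snd (gE D ! d0) = None"
    and Hs: "\<forall>j<length (gE D). j \<noteq> d0 \<longrightarrow>
      HL (Hs j) (the (snd (gE D ! j))) \<and> TimesL_invertible (Hs j) (the (snd (gE D ! j)))"
  shows "TimesL_invertible (divL_graph H e N D d0 Hs) A"
  unfolding TimesL_invertible_def
proof (intro allI impI)
  let ?X = "divL_graph H e N D d0 Hs"
  fix e0 M assume e0: "e0 < length (gE ?X)" and l: "snd (gE ?X ! e0) = Times M"
  have HLs: "\<forall>j<length (gE D). j \<noteq> d0 \<longrightarrow> HL (Hs j) (the (snd (gE D ! j)))"
    using Hs by blast
  have hs: "\<forall>j<length (gE D). j \<noteq> d0 \<longrightarrow> hg_struct (Hs j) \<and> length (gext (Hs j)) = ttype (the (snd (gE D ! j)))"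
    using HLs HL_wf wfg_hg_struct by blast
  obtain \<phi> \<psi> where d: "is_repl ?X H {e} (\<lambda>i. gE H ! i) (\<lambda>_. divL_part N D d0 Hs) \<phi> \<psi>"
    using is_repl_divL_graph[OF wH e wD d0 hs] by blast
  from nth_mem[OF e0] consider
      (outer) y where "y \<in># mset (gE H) - {#gE H ! e#}" "gE ?X ! e0 = map_edge \<phi> y"
    | (inner) e2 where "e2 < length (gE (divL_part N D d0 Hs))" "gE ?X ! e0 = map_edge (\<psi> e) (gE (divL_part N D d0 Hs) ! e2)"
    unfolding is_repl_mem_edges[OF d] by (auto simp: in_set_conv_nth)
  then show "HL (repl1 ?X e0 M) A"
  proof cases
    case outer
    then obtain e1 where e1: "e1 < length (gE H)" "e1 \<noteq> e" "gE H ! e1 = y"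
      using mem_diff_nth_idx[OF _ e(1)] by blast
    have l1: "snd (gE H ! e1) = Times M" using l outer(2) e1(3) by simp
    show ?thesis
      by (rule HL_repl1_divL_graph_outer[OF _ wH e wD d0 HLs e1(1,2) l1 d e0(1)])
         (use inv e1(1) l1 outer(2) e1(3) in \<open>auto simp: TimesL_invertible_def\<close>)
  next
    case inner
    have "snd (gE (divL_part N D d0 Hs) ! e2) = Times M" using l inner(2) by simp
    then obtain j e3 where j: "j < length (gE D)" "j \<noteq> d0" and e3: "e3 < length (gE (Hs j))"
      and y: "gE (divL_part N D d0 Hs) ! e2 = map_edge (h_node j (Hs j) (fst (gE (fill D (Div N D)) ! j))) (gE (Hs j) ! e3)"
      by (rule divL_part_edge_Times[OF wD d0 hs inner(1)])
    have l3: "snd (gE (Hs j) ! e3) = Times M" using l inner(2) y by simp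
    have HL3: "HL (repl1 (Hs j) e3 M) (the (snd (gE D ! j)))"
      using Hs j e3 l3 unfolding TimesL_invertible_def by blast
    show ?thesis
      by (rule HL_repl1_divL_graph_inner[OF HL wH e wD d0 HLs j e3 l3 HL3 d inner(1) y e0(1) inner(2)])
  qed
qed

lemma HL_TimesL_inv: "HL H C \<Longrightarrow> TimesL_invertible H C"
proof (induction rule: HL.induct)
  case (Ax p n)
  show ?case by (simp add: TimesL_invertible_def handle_def)
next
  case (Iso G A G')
  show ?case by (rule TimesL_invertible_hg_iso[OF Iso.IH Iso.hyps])
next
  case (DivL H A e N D d0 Hs)
  show ?case by (rule TimesL_invertible_DivL[OF DivL.hyps(1) DivL.IH(1) DivL.hyps(2-7) DivL.IH(2)])
next
  case (DivR D d0 F N)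
  show ?case by (rule TimesL_invertible_DivR[OF DivR.IH DivR.hyps(2-6)])
next
  case (TimesL G e F A)
  show ?case by (rule TimesL_invertible_TimesL[OF TimesL.IH TimesL.hyps])
next
  case (TimesR M Hs)
  show ?case by (rule TimesL_invertible_TimesR[OF TimesR.hyps(1) TimesR.IH])
qed

section \<open>Inversion of DivR\<close>

definition DivR_invertible :: "tp hgraph \<Rightarrow> tp \<Rightarrow> bool" where
  "DivR_invertible H A \<longleftrightarrow>
     (\<forall>N D e0. A = Div N D \<longrightarrow> e0 < length (gE D) \<longrightarrow> snd (gE D ! e0) = None \<longrightarrow> HL (plug D e0 H) N)"

lemma DivR_invertible_hg_iso:
  assumes inv: "DivR_invertible G A" and HL: "HL G A" and iso: "hg_iso G G'"
  shows "DivR_invertible G' A"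
  unfolding DivR_invertible_def
proof (intro allI impI)
  fix N D e0 assume A: "A = Div N D" and e0: "e0 < length (gE D)" "snd (gE D ! e0) = None"
  have wG: "wfg G" and wD: "wf_tp (Div N D)" and lG: "length (gext G) = ttype (Div N D)"
    using HL_wf[OF HL] A by auto
  have wG': "wfg G'" using HL_wf[OF HL.Iso[OF HL iso]] by blast
  have "hg_iso (plug D e0 G) (plug D e0 G')"
    unfolding plug_def
    by (rule repl1_hg_iso_part[OF plug_host(1,2)[OF wD e0] wfg_hg_struct[OF wG] wfg_hg_struct[OF wG'] _ iso])
       (use plug_host(3)[OF wD e0] lG in simp)
  moreover have "HL (plug D e0 G) N" using inv A e0 unfolding DivR_invertible_def by blast
  ultimately show "HL (plug D e0 G') N" using HL.Iso by blast
qed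

lemma DivR_invertible_DivR:
  assumes HL: "HL (plug D d0 F) N" and wD: "wf_tp (Div N D)" and d0: "d0 < length (gE D)" "snd (gE D ! d0) = None"
  shows "DivR_invertible F (Div N D)"
  unfolding DivR_invertible_def
proof (intro allI impI)
  fix N' D' e0 assume "Div N D = Div N' D'" and e0: "e0 < length (gE D')" "snd (gE D' ! e0) = None"
  then have "N' = N" "D' = D" "e0 = d0" using Div_dollar_unique[OF wD _ d0(1) _ d0(2)] by auto
  then show "HL (plug D' e0 F) N'" using HL by simp
qed

lemma DivR_invertible_TimesL:
  assumes inv: "DivR_invertible (repl1 G e F) A" and HL: "HL (repl1 G e F) A"
    and wG: "wfg G" and e: "e < length (gE G)" "snd (gE G ! e) = Times F"
  shows "DivR_invertible G A"
  unfolding DivR_invertible_def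
proof (intro allI impI)
  fix N D e0 assume A: "A = Div N D" and e0: "e0 < length (gE D)" "snd (gE D ! e0) = None"
  note tm = wfg_Times_edge[OF wG e]
  have wD: "wf_tp (Div N D)" and lG: "length (gext G) = ttype (Div N D)" using HL_wf[OF HL] A by auto
  have lD: "length (fst (gE (map_hgraph the D) ! e0)) = length (gext G)" using plug_host(3)[OF wD e0] lG by simp
  obtain e' where e': "e' < length (gE (plug D e0 G))"
    "gE (plug D e0 G) ! e' = map_edge (h_node e0 G (fst (gE (map_hgraph the D) ! e0))) (gE G ! e)"
    and iso: "hg_iso (repl1 (plug D e0 G) e' F) (plug D e0 (repl1 G e F))"
    using repl1_assoc[OF plug_host(1,2)[OF wD e0] wfg_hg_struct[OF wG] lD e(1) tm(2,3)] unfolding plug_def by blast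
  have "HL (plug D e0 (repl1 G e F)) N" using inv A e0 unfolding DivR_invertible_def by blast
  moreover have "wfg (repl1 (plug D e0 G) e' F)"
    by (rule wfg_repl1[OF wfg_plug[OF wD e0 wG lG] e'(1) tm(1)]) (use e'(2) tm(3) in simp)
  then have "hg_iso (plug D e0 (repl1 G e F)) (repl1 (plug D e0 G) e' F)"
    by (rule hg_iso_sym[OF wfg_hg_struct iso])
  ultimately have "HL (repl1 (plug D e0 G) e' F) N" by (rule HL.Iso)
  then show "HL (plug D e0 G) N"
    by (rule HL.TimesL[OF _ wfg_plug[OF wD e0 wG lG] e'(1)]) (use e'(2) e(2) in simp)
qed

lemma DivR_invertible_DivL:
  assumes HL: "HL H A" and inv: "DivR_invertible H A" and wH: "wfg H"
    and e: "e < length (gE H)" "snd (gE H ! e) = N'"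
    and wD': "wf_tp (Div N' D')" and d0': "d0' < length (gE D')" "snd (gE D' ! d0') = None"
    and HLs: "\<forall>j<length (gE D'). j \<noteq> d0' \<longrightarrow> HL (Hs j) (the (snd (gE D' ! j)))"
  shows "DivR_invertible (divL_graph H e N' D' d0' Hs) A"
  unfolding DivR_invertible_def
proof (intro allI impI)
  let ?X = "divL_graph H e N' D' d0' Hs"
  fix N D e0 assume A: "A = Div N D" and e0: "e0 < length (gE D)" "snd (gE D ! e0) = None"
  have hs: "\<forall>j<length (gE D'). j \<noteq> d0' \<longrightarrow> hg_struct (Hs j) \<and> length (gext (Hs j)) = ttype (the (snd (gE D' ! j)))"
    using HLs HL_wf wfg_hg_struct by blast
  have wD: "wf_tp (Div N D)" and lH: "length (gext H) = ttype (Div N D)" using HL_wf[OF HL] A by auto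
  have HLX: "HL ?X A" by (rule HL.DivL[OF HL wH e wD' d0']) (use HLs in blast)
  have wX: "wfg ?X" and lX: "length (gext ?X) = ttype (Div N D)" using HL_wf[OF HLX] A by auto
  define P where "P = plug D e0 H"
  have dP: "is_repl P (map_hgraph the D) {e0} (\<lambda>i. gE (map_hgraph the D) ! i) (\<lambda>_. H) g_node
      (\<lambda>i. h_node i H (fst (gE (map_hgraph the D) ! i)))"
    unfolding P_def by (rule is_repl_plug[OF wD e0 wfg_hg_struct[OF wH] lH])
  have wP: "wfg P" unfolding P_def by (rule wfg_plug[OF wD e0 wH lH])
  obtain e' where e': "e' < length (gE P)"
    "gE P ! e' = map_edge (h_node e0 H (fst (gE (map_hgraph the D) ! e0))) (gE H ! e)"
    using is_repl_edge_inserted[OF dP _ nth_mem[OF e(1)]] by auto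
  have le': "snd (gE P ! e') = N'" using e'(2) e(2) by simp
  have "HL P N" using inv A e0 unfolding DivR_invertible_def P_def by blast
  then have "HL (divL_graph P e' N' D' d0' Hs) N"
    by (rule HL.DivL[OF _ wP e'(1) le' wD' d0']) (use HLs in blast)
  moreover have "hg_iso (divL_graph P e' N' D' d0' Hs) (plug D e0 ?X)"
  proof -
    obtain \<phi>2 \<psi>2 where d2: "is_repl (divL_graph P e' N' D' d0' Hs) P {e'} (\<lambda>i. gE P ! i)
        (\<lambda>_. divL_part N' D' d0' Hs) \<phi>2 \<psi>2"
      using is_repl_divL_graph[OF wP e'(1) le' wD' d0' hs] by blast
    obtain \<phi>3 \<psi>3 where d3: "is_repl ?X H {e} (\<lambda>i. gE H ! i) (\<lambda>_. divL_part N' D' d0' Hs) \<phi>3 \<psi>3"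
      using is_repl_divL_graph[OF wH e wD' d0' hs] by blast
    show ?thesis
      by (rule repl1_nested_hg_iso[OF dP _ e'(2) d2 d3 is_repl_plug[OF wD e0 wfg_hg_struct[OF wX] lX]])
         (auto simp: hg_iso_refl)
  qed
  ultimately show "HL (plug D e0 ?X) N" by (rule HL.Iso)
qed

lemma HL_DivR_inv: "HL H A \<Longrightarrow> DivR_invertible H A"
proof (induction rule: HL.induct)
  case (Iso G A G')
  show ?case by (rule DivR_invertible_hg_iso[OF Iso.IH Iso.hyps])
next
  case (DivL H A e N D d0 Hs)
  show ?case
    by (rule DivR_invertible_DivL[OF DivL.hyps(1) DivL.IH(1) DivL.hyps(2-7)]) (use DivL.IH(2) in blast)
next
  case (DivR D d0 F N)
  show ?case by (rule DivR_invertible_DivR[OF DivR.hyps(1-4)])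
next
  case (TimesL G e F A)
  show ?case by (rule DivR_invertible_TimesL[OF TimesL.IH TimesL.hyps])
qed (simp_all add: DivR_invertible_def) \<comment> \<open>Ax and TimesR never derive a Div type\<close>

theorem proposition2:
  shows "(\<forall>H C e0 M. HL H C \<longrightarrow> e0 < length (gE H) \<longrightarrow> snd (gE H ! e0) = Times M
            \<longrightarrow> HL (repl1 H e0 M) C)
       \<and> (\<forall>H N D e0. HL H (Div N D) \<longrightarrow> e0 < length (gE D) \<longrightarrow> snd (gE D ! e0) = None
            \<longrightarrow> HL (plug D e0 H) N)"
  using HL_TimesL_inv HL_DivR_inv unfolding TimesL_invertible_def DivR_invertible_def by blast

end
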